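(* Let $e>1$ be odd, $t\ge0$, $\mathbf c=(t+(1-e)/2,0)$, $\mu$ a bipartition and $\lambda=\Phi_t(\mu)$. Let $\mu'=((\mu')^1,(\mu')^2)$ and $\mathbf c'\in\mathbb Z^2$ be such that $\mathfrak B(\mu',\mathbf c')$ is obtained from $\mathfrak B(\mu,\mathbf c)$ by an elementary operation of type (a) or (b). Let $\lambda'$ be the partition associated to the $1$-runner abacus $\{2j+e:j\in\mathfrak B(\mu',\mathbf c')^1\}\cup\{2j:j\in\mathfrak B(\mu',\mathbf c')^2\}$. Then $\lambda'$ is obtained from $\lambda$ by removing an $e$-hook. Let $t'$ be such that $\lambda'$ has $2$-core $\Delta_{t'}$ and let $\tilde\mu$ be the bipartition with $\Phi_{t'}(\tilde\mu)=\lambda'$. If the operation is of type (b), then $t'=t+2$. If it is of type (a), then $t'=t-2$ if $t\ge2$, $t'=0$ if $t=1$, and $t'=1$ if $t=0$. Moreover $\tilde\mu=\mu'$ if $t$ and $t'$ have the same parity, and $\tilde\mu=((\mu')^2,(\mu')^1)$ otherwise.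
   Context: A $1$-runner abacus is a subset $\mathfrak A\subseteq\mathbb Z$ with $-j\in\mathfrak A$ and $j\notin\mathfrak A$ for all $j\ge n$, for some $n\ge1$; listing its elements $a_1>a_2>\cdots$, $\lambda_j$ is the number of elements of $\mathbb Z\setminus\mathfrak A$ less than $a_j$, and $(\lambda_j)$ is the associated partition; its charge is $a_1-\lambda_1$. For a bipartition $\mu$ and $\mathbf c=(c_1,c_2)$, the symbol $\mathfrak B(\mu,\mathbf c)=(\mathfrak B^1,\mathfrak B^2)$ (first and second row) has $\mathfrak B^i=\{\mu^i_j-j+c_i+1:j\ge1\}$; every pair of $1$-runner abaci is $\mathfrak B(\mu,\mathbf c)$ for a unique charged bipartition, $\mu^i$ and $c_i$ being the partition and charge associated to row $i$. Elementary operations on a symbol: (a) delete an element $j$ of the first row which is not in the second row, and insert $j$ into the second row; (b) delete an element $j$ of the second row such that $j-e$ is not in the first row, and insert $j-e$ into the first row. $\Delta_t=(t,\dots,1)$. $2$-quotient: for a $\beta$-set $B$ of $\lambda$ with $|B|$ odd, $\lambda^{(2)}=(\pi(\{x/2:x\in B\text{ even}\}),\pi(\{(x-1)/2:x\in B\text{ odd}\}))$, $\pi(X)$ denoting the partition with $\beta$-set $X$; if $\lambda$ has $2$-core $\Delta_t$, $\bar\lambda^{(2)}=\lambda^{(2)}$ for $t$ even and the swapped pair for $t$ odd; $\Phi_t(\mu)$ is the unique $\lambda$ with $2$-core $\Delta_t$ and $\bar\lambda^{(2)}=\mu$. *)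

theory Defs
  imports Main
begin

text \<open>Partitions are represented as functions nat => nat: p 0 >= p 1 >= ... , eventually 0
  (part p i is the (i+1)-th part).\<close>

definition is_partition :: "(nat \<Rightarrow> nat) \<Rightarrow> bool" where
  "is_partition p \<longleftrightarrow> (\<forall>i. p (Suc i) \<le> p i) \<and> (\<exists>n. \<forall>i\<ge>n. p i = 0)"

definition is_bipartition :: "(nat \<Rightarrow> nat) \<times> (nat \<Rightarrow> nat) \<Rightarrow> bool" where
  "is_bipartition m \<longleftrightarrow> is_partition (fst m) \<and> is_partition (snd m)"

definition is_abacus :: "int set \<Rightarrow> bool" where
  "is_abacus A \<longleftrightarrow> (\<exists>n::int\<ge>1. \<forall>j\<ge>n. -j \<in> A \<and> j \<notin> A)"

text \<open>The (i+1)-th largest element a_(i+1) of an abacus.\<close>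
definition abacus_elt :: "int set \<Rightarrow> nat \<Rightarrow> int" where
  "abacus_elt A i = (THE x. x \<in> A \<and> card {y\<in>A. x < y} = i)"

definition abacus_part :: "int set \<Rightarrow> nat \<Rightarrow> nat" where
  "abacus_part A i = card {x. x \<notin> A \<and> x < abacus_elt A i}"

text \<open>Row of a symbol: {mu_j - j + c + 1 : j >= 1} (here with 0-based index i = j - 1).\<close>
definition beta_row :: "(nat \<Rightarrow> nat) \<Rightarrow> int \<Rightarrow> int set" where
  "beta_row p c = {int (p i) - int i + c | i. True}"

definition symbol :: "(nat \<Rightarrow> nat) \<times> (nat \<Rightarrow> nat) \<Rightarrow> int \<times> int \<Rightarrow> int set \<times> int set" where
  "symbol m c = (beta_row (fst m) (fst c), beta_row (snd m) (snd c))"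

definition elem_op_a :: "int set \<times> int set \<Rightarrow> int set \<times> int set \<Rightarrow> bool" where
  "elem_op_a B B' \<longleftrightarrow> (\<exists>j. j \<in> fst B \<and> j \<notin> snd B \<and> B' = (fst B - {j}, insert j (snd B)))"

definition elem_op_b :: "nat \<Rightarrow> int set \<times> int set \<Rightarrow> int set \<times> int set \<Rightarrow> bool" where
  "elem_op_b e B B' \<longleftrightarrow> (\<exists>j. j \<in> snd B \<and> j - int e \<notin> fst B \<and>
      B' = (insert (j - int e) (fst B), snd B - {j}))"

text \<open>Young diagram (0-based rows and columns) and removal of a rim e-hook
  (border strip: connected skew shape of size e containing no 2x2 square).\<close>
definition diagram :: "(nat \<Rightarrow> nat) \<Rightarrow> (nat \<times> nat) set" where
  "diagram p = {(i, j). j < p i}"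

definition cell_adj :: "(nat \<times> nat) set \<Rightarrow> ((nat \<times> nat) \<times> (nat \<times> nat)) set" where
  "cell_adj S = {(x, y). x \<in> S \<and> y \<in> S \<and>
      \<bar>int (fst x) - int (fst y)\<bar> + \<bar>int (snd x) - int (snd y)\<bar> = 1}"

definition removes_hook :: "nat \<Rightarrow> (nat \<Rightarrow> nat) \<Rightarrow> (nat \<Rightarrow> nat) \<Rightarrow> bool" where
  "removes_hook e p q \<longleftrightarrow> is_partition p \<and> is_partition q \<and> diagram q \<subseteq> diagram p \<and>
     (let S = diagram p - diagram q in
        card S = e \<and> (\<forall>x\<in>S. \<forall>y\<in>S. (x, y) \<in> (cell_adj S)\<^sup>*) \<and>
        \<not> (\<exists>i j. {(i, j), (Suc i, j), (i, Suc j), (Suc i, Suc j)} \<subseteq> S))"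

definition has_core :: "nat \<Rightarrow> (nat \<Rightarrow> nat) \<Rightarrow> (nat \<Rightarrow> nat) \<Rightarrow> bool" where
  "has_core e p \<kappa> \<longleftrightarrow> is_partition p \<and>
     (p, \<kappa>) \<in> {(a, b). removes_hook e a b}\<^sup>* \<and> \<not> (\<exists>q. removes_hook e \<kappa> q)"

definition stair :: "nat \<Rightarrow> nat \<Rightarrow> nat" where
  "stair t i = (if i < t then t - i else 0)"

text \<open>Classical beta-set with n elements of a partition (n at least its length):
  {p_i + n - i : 1 <= i <= n}, 0-based.\<close>
definition beta_nat :: "(nat \<Rightarrow> nat) \<Rightarrow> nat \<Rightarrow> nat set" where
  "beta_nat p n = {p i + (n - 1 - i) | i. i < n}"

definition part_of_beta :: "nat set \<Rightarrow> nat \<Rightarrow> nat" where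
  "part_of_beta X = (THE p. is_partition p \<and> (\<forall>i\<ge>card X. p i = 0) \<and> beta_nat p (card X) = X)"

definition plength :: "(nat \<Rightarrow> nat) \<Rightarrow> nat" where
  "plength p = card {i. p i \<noteq> 0}"

definition quot2 :: "(nat \<Rightarrow> nat) \<Rightarrow> (nat \<Rightarrow> nat) \<times> (nat \<Rightarrow> nat)" where
  "quot2 p = (let B = beta_nat p (2 * plength p + 1) in
     (part_of_beta {x div 2 | x. x \<in> B \<and> even x},
      part_of_beta {(x - 1) div 2 | x. x \<in> B \<and> odd x}))"

definition quot2_bar :: "nat \<Rightarrow> (nat \<Rightarrow> nat) \<Rightarrow> (nat \<Rightarrow> nat) \<times> (nat \<Rightarrow> nat)" where
  "quot2_bar t p = (if even t then quot2 p else prod.swap (quot2 p))"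

definition Phi :: "nat \<Rightarrow> (nat \<Rightarrow> nat) \<times> (nat \<Rightarrow> nat) \<Rightarrow> nat \<Rightarrow> nat" where
  "Phi t m = (THE p. is_partition p \<and> has_core 2 p (stair t) \<and> quot2_bar t p = m)"

end

theory Submission
  imports Defs
begin

text \<open>Put the beta row of the first component of a bipartition on the odd and that of the
  second on the even positions of a 1-runner abacus; with charges t and 0 this abacus belongs
  to Phi_t, since peeling off dominoes (sliding beads down by two) empties both rows and leaves
  the staircase, while halving the positions recovers the 2-quotient. With h = (e - 1) / 2, the
  abacus of the statement is this interleaving with the first row of the symbol shifted by h,
  and each elementary operation slides a single bead of it down by e positions into a gap,
  which removes a rim e-hook. The operation changes the charges by (-1, +1) or (+1, -1), and
  the charge difference of the two rows determines both the new staircase core (the signed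
  content count is a domino invariant) and whether the quotient components are swapped.\<close>

section \<open>Beta rows of partitions\<close>

lemma partition_antimono: "is_partition p \<Longrightarrow> i \<le> k \<Longrightarrow> p k \<le> p i"
  unfolding is_partition_def by (metis lift_Suc_antimono_le)

lemma partition_eventually_zero: "is_partition p \<Longrightarrow> \<exists>N. \<forall>i\<ge>N. p i = 0"
  unfolding is_partition_def by blast

lemma partition_beta_strict_mono:
  "is_partition p \<Longrightarrow> i < k \<Longrightarrow> int (p k) - int k < int (p i) - int i"
  using partition_antimono[of p i k] by linarith

lemma partition_beta_less_iff:
  "is_partition p \<Longrightarrow> (int (p k) - int k + c < int (p i) - int i + c) = (i < k)"
  using partition_beta_strict_mono[of p i k] partition_beta_strict_mono[of p k i]
  by (cases "i < k"; cases "k < i") auto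

lemma partition_beta_eq_iff:
  "is_partition p \<Longrightarrow> (int (p k) - int k + c = int (p i) - int i + c) = (i = k)"
  using partition_beta_strict_mono[of p i k] partition_beta_strict_mono[of p k i]
  by (cases "i < k"; cases "k < i") auto

lemma inj_partition_beta: "is_partition p \<Longrightarrow> inj (\<lambda>k. int (p k) - int k + c)"
  unfolding inj_def using partition_beta_eq_iff by metis

lemma mem_beta_row: "x \<in> beta_row p c \<longleftrightarrow> (\<exists>i. x = int (p i) - int i + c)"
  unfolding beta_row_def by auto

lemma beta_row_shift: "(\<lambda>x. x + d) ` beta_row p c = beta_row p (c + d)"
proof (intro set_eqI iffI)
  fix z assume "z \<in> (\<lambda>x. x + d) ` beta_row p c"
  then obtain w where "w \<in> beta_row p c" "z = w + d" by blast
  then obtain i where "z = int (p i) - int i + c + d" unfolding mem_beta_row by blast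
  then have "z = int (p i) - int i + (c + d)" by simp
  then show "z \<in> beta_row p (c + d)" unfolding mem_beta_row by blast
next
  fix z assume "z \<in> beta_row p (c + d)"
  then obtain i where "z = (int (p i) - int i + c) + d" unfolding mem_beta_row by force
  moreover have "int (p i) - int i + c \<in> beta_row p c" unfolding mem_beta_row by blast
  ultimately show "z \<in> (\<lambda>x. x + d) ` beta_row p c" by blast
qed

lemma beta_row_bounded_above: "is_partition p \<Longrightarrow> x \<in> beta_row p c \<Longrightarrow> x \<le> int (p 0) + c"
proof -
  assume P: "is_partition p" and "x \<in> beta_row p c"
  then obtain i where "x = int (p i) - int i + c" unfolding mem_beta_row by blast
  moreover have "p i \<le> p 0" using partition_antimono[OF P] by simp
  ultimately show ?thesis by simp
qed

lemma beta_row_contains_below: "is_partition p \<Longrightarrow> \<exists>a. \<forall>x<a. x \<in> beta_row p c"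
proof -
  assume "is_partition p"
  then obtain N where N: "\<forall>i\<ge>N. p i = 0" using partition_eventually_zero by blast
  have "x = int (p (nat (c - x))) - int (nat (c - x)) + c" if "x < c - int N" for x
    using N that by auto
  then show ?thesis unfolding mem_beta_row by blast
qed

lemma abacus_elt_beta_row:
  assumes P: "is_partition p"
  shows "abacus_elt (beta_row p c) i = int (p i) - int i + c"
proof -
  define g where "g k = int (p k) - int k + c" for k
  have "{y \<in> beta_row p c. g k < y} = g ` {..<k}" for k
    using partition_beta_less_iff[OF P] unfolding g_def mem_beta_row by auto
  then have card: "card {y \<in> beta_row p c. g k < y} = k" for k
    using inj_on_subset[OF inj_partition_beta[OF P]] unfolding g_def by (simp add: card_image)
  show ?thesis unfolding abacus_elt_def g_def[symmetric]
  proof (rule the_equality)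
    show "g i \<in> beta_row p c \<and> card {y \<in> beta_row p c. g i < y} = i"
      using card by (auto simp: g_def mem_beta_row)
  next
    fix x assume "x \<in> beta_row p c \<and> card {y \<in> beta_row p c. x < y} = i"
    then show "x = g i" using card by (auto simp: g_def mem_beta_row)
  qed
qed

text \<open>Once n is past the length of p, the positions c - n, ..., a_i - 1 below the bead a_i
  are the gaps counted by abacus_part together with the n - i beads a_(i+1), ..., a_n.\<close>
lemma abacus_part_beta_row:
  assumes P: "is_partition p"
  shows "abacus_part (beta_row p c) = p"
proof
  fix i
  define g where "g k = int (p k) - int k + c" for k
  obtain N where N: "\<forall>i\<ge>N. p i = 0" using partition_eventually_zero[OF P] by blast
  define n where "n = max N i"
  have inj: "inj g" using inj_partition_beta[OF P] unfolding g_def .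
  have below: "\<exists>k. x = g k" if "x < c - int n" for x
  proof -
    have "g (nat (c - x)) = x" using N that n_def by (simp add: g_def)
    then show ?thesis by metis
  qed
  have between: "k \<in> {i<..n}" if "g k < g i" "c - int n \<le> g k" for k
  proof -
    have "i < k" using that partition_beta_less_iff[OF P] g_def by auto
    moreover have "k \<le> n"
    proof (rule ccontr)
      assume "\<not> k \<le> n" then have "p k = 0" using N n_def by auto
      then show False using that \<open>\<not> k \<le> n\<close> by (simp add: g_def)
    qed
    ultimately show ?thesis by auto
  qed
  have gaps: "{x. x \<notin> beta_row p c \<and> x < g i} = {c - int n..<g i} - g ` {i<..n}"
    unfolding mem_beta_row g_def[symmetric]
  proof (intro set_eqI iffI)
    fix x assume x: "x \<in> {x. (\<nexists>i. x = g i) \<and> x < g i}"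
    then have "\<not> x < c - int n" using below by auto
    then show "x \<in> {c - int n..<g i} - g ` {i<..n}" using x by auto
  next
    fix x assume x: "x \<in> {c - int n..<g i} - g ` {i<..n}"
    have "x \<noteq> g k" for k
    proof
      assume "x = g k"
      then have "k \<in> {i<..n}" using x by (intro between) auto
      then show False using x \<open>x = g k\<close> by blast
    qed
    then show "x \<in> {x. (\<nexists>i. x = g i) \<and> x < g i}" using x by auto
  qed
  have sub: "g ` {i<..n} \<subseteq> {c - int n..<g i}"
  proof
    fix y assume "y \<in> g ` {i<..n}"
    then obtain k where k: "k \<in> {i<..n}" "y = g k" by auto
    then have "g k < g i" using partition_beta_strict_mono[OF P, of i k] by (auto simp: g_def)
    moreover have "c - int n \<le> g k" using k by (auto simp: g_def)
    ultimately show "y \<in> {c - int n..<g i}" using k by auto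
  qed
  have "abacus_part (beta_row p c) i = card {c - int n..<g i} - card (g ` {i<..n})"
    unfolding abacus_part_def abacus_elt_beta_row[OF P] g_def[symmetric] gaps
    by (rule card_Diff_subset[OF _ sub]) simp
  also have "\<dots> = p i"
  proof -
    have "card (g ` {i<..n}) = n - i" using inj_on_subset[OF inj] by (simp add: card_image)
    moreover have "card {c - int n..<g i} = p i + (n - i)" using n_def by (simp add: g_def)
    ultimately show ?thesis by simp
  qed
  finally show "abacus_part (beta_row p c) i = p i" .
qed

lemma abacus_part_beta_row_shift:
  "is_partition p \<Longrightarrow> abacus_part ((\<lambda>x. x + d) ` beta_row p c) = p"
  by (simp add: beta_row_shift abacus_part_beta_row)

lemma card_beta_row_atLeast:
  assumes P: "is_partition p"
  shows "\<exists>T0. \<forall>T\<le>T0. card (beta_row p c \<inter> {T..}) = nat (c - T) + 1"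
proof -
  define g where "g k = int (p k) - int k + c" for k
  obtain N where N: "\<forall>i\<ge>N. p i = 0" using partition_eventually_zero[OF P] by blast
  have "beta_row p c \<inter> {T..} = g ` {..nat (c - T)}" if T: "T \<le> c - int N" for T
  proof (intro set_eqI iffI)
    fix x assume x: "x \<in> beta_row p c \<inter> {T..}"
    then obtain i where i: "x = g i" by (auto simp: mem_beta_row g_def)
    have "i \<le> nat (c - T)"
    proof (rule ccontr)
      assume "\<not> ?thesis"
      then show False using x i T N[rule_format, of i] by (auto simp: g_def)
    qed
    then show "x \<in> g ` {..nat (c - T)}" using i by auto
  next
    fix x assume "x \<in> g ` {..nat (c - T)}"
    then show "x \<in> beta_row p c \<inter> {T..}" using T by (auto simp: mem_beta_row g_def)
  qed
  then show ?thesis using inj_on_subset[OF inj_partition_beta[OF P]]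
    by (intro exI[of _ "c - int N"]) (auto simp: card_image g_def)
qed

lemma beta_row_remove_charge:
  assumes P: "is_partition p" and Q: "is_partition q"
    and j: "j \<in> beta_row p c" and eq: "beta_row q c' = beta_row p c - {j}"
  shows "c' = c - 1"
proof -
  obtain T1 where T1: "\<forall>T\<le>T1. card (beta_row p c \<inter> {T..}) = nat (c - T) + 1"
    using card_beta_row_atLeast[OF P] by blast
  obtain T2 where T2: "\<forall>T\<le>T2. card (beta_row q c' \<inter> {T..}) = nat (c' - T) + 1"
    using card_beta_row_atLeast[OF Q] by blast
  define T where "T = min (min T1 T2) (min j (min c c'))"
  have fin: "finite (beta_row p c \<inter> {T..})"
    using T1 by (intro card_ge_0_finite) (simp add: T_def)
  have "beta_row q c' \<inter> {T..} = (beta_row p c \<inter> {T..}) - {j}" using eq by auto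
  then have "card (beta_row q c' \<inter> {T..}) = card (beta_row p c \<inter> {T..}) - 1"
    using j fin by (simp add: T_def)
  then have "nat (c' - T) + 1 = nat (c - T)" using T1 T2 by (simp add: T_def)
  moreover have "T \<le> c" "T \<le> c'" by (auto simp: T_def)
  ultimately show ?thesis by linarith
qed

lemma beta_row_insert_charge:
  assumes P: "is_partition p" and Q: "is_partition q"
    and j: "j \<notin> beta_row p c" and eq: "beta_row q c' = insert j (beta_row p c)"
  shows "c' = c + 1"
proof -
  have "j \<in> beta_row q c'" "beta_row p c = beta_row q c' - {j}" using eq j by auto
  then have "c = c' - 1" by (rule beta_row_remove_charge[OF Q P])
  then show ?thesis by simp
qed

lemma strict_sorted_nth_ge:
  assumes "sorted_wrt (<) (xs :: nat list)" "k < length xs"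
  shows "k \<le> xs ! k"
  using assms(2)
proof (induction k)
  case 0 then show ?case by simp
next
  case (Suc k)
  have "xs ! k < xs ! Suc k" using sorted_wrt_nth_less[OF assms(1)] Suc.prems by auto
  then show ?case using Suc by auto
qed

lemma is_partition_sorted_gaps:
  assumes s: "sorted_wrt (<) xs"
  defines "n \<equiv> length xs"
  shows "is_partition (\<lambda>i. if i < n then xs ! (n - 1 - i) - (n - 1 - i) else 0)"
  unfolding is_partition_def
proof (intro conjI allI exI[of _ n])
  fix i
  show "(if Suc i < n then xs ! (n - 1 - Suc i) - (n - 1 - Suc i) else 0)
      \<le> (if i < n then xs ! (n - 1 - i) - (n - 1 - i) else 0)"
  proof (cases "Suc i < n")
    case True
    define k where "k = n - 1 - Suc i"
    have k: "n - 1 - i = Suc k" using True k_def by simp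
    have "xs ! k < xs ! Suc k" using sorted_wrt_nth_less[OF s] k True by (auto simp: n_def)
    moreover have "k \<le> xs ! k" using strict_sorted_nth_ge[OF s] True by (auto simp: k_def n_def)
    moreover have "n - 1 - Suc i = k" by (simp add: k_def)
    ultimately show ?thesis using True k by simp
  qed simp
qed simp

lemma ex_partition_beta_nat:
  assumes fin: "finite (X :: nat set)"
  shows "\<exists>p. is_partition p \<and> (\<forall>i\<ge>card X. p i = 0) \<and> beta_nat p (card X) = X"
proof -
  obtain xs where s: "sorted_wrt (<) xs" "set xs = X"
    using ex1_sorted_list_for_set_if_finite[OF fin] by blast
  define n where "n = length xs"
  have n: "card X = n" using distinct_card[OF strict_sorted_iff[THEN iffD1, OF s(1), THEN conjunct2]] s(2) n_def
    by simp
  define p where "p i = (if i < n then xs ! (n - 1 - i) - (n - 1 - i) else 0)" for i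
  have ge: "k < n \<Longrightarrow> k \<le> xs ! k" for k using strict_sorted_nth_ge[OF s(1)] n_def by blast
  have part: "is_partition p"
    using is_partition_sorted_gaps[OF s(1)] unfolding n_def[symmetric] p_def[abs_def] .
  have "beta_nat p n = X"
  proof -
    have "beta_nat p n = {xs ! (n - 1 - i) | i. i < n}"
      unfolding beta_nat_def
    proof (intro Collect_cong ex_cong1)
      fix x i
      show "(x = p i + (n - 1 - i) \<and> i < n) = (x = xs ! (n - 1 - i) \<and> i < n)"
        using ge[of "n - 1 - i"] by (auto simp: p_def)
    qed
    also have "\<dots> = {xs ! k | k. k < n}"
    proof (intro set_eqI iffI)
      fix x assume "x \<in> {xs ! (n - 1 - i) | i. i < n}"
      then obtain i where "i < n" "x = xs ! (n - 1 - i)" by auto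
      then show "x \<in> {xs ! k | k. k < n}" by (intro CollectI exI[of _ "n - 1 - i"]) auto
    next
      fix x assume "x \<in> {xs ! k | k. k < n}"
      then obtain k where "k < n" "x = xs ! k" by auto
      then show "x \<in> {xs ! (n - 1 - i) | i. i < n}"
        by (intro CollectI exI[of _ "n - 1 - k"]) auto
    qed
    also have "\<dots> = set xs" by (auto simp: set_conv_nth n_def)
    finally show ?thesis using s(2) by simp
  qed
  then show ?thesis using part n by (intro exI[of _ p]) (auto simp: p_def)
qed

lemma abacus_eq_beta_row:
  assumes low: "{x. x < a} \<subseteq> A" and fin: "finite (A \<inter> {a..})"
  shows "\<exists>p c. is_partition p \<and> A = beta_row p c"
proof -
  define X where "X = (\<lambda>x. nat (x - a)) ` (A \<inter> {a..})"
  have "finite X" using fin X_def by simp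
  then obtain p where P: "is_partition p" "\<forall>i\<ge>card X. p i = 0" "beta_nat p (card X) = X"
    using ex_partition_beta_nat by blast
  define n where "n = card X"
  have "A = beta_row p (a + int n - 1)"
  proof (intro set_eqI iffI)
    fix x assume x: "x \<in> A"
    show "x \<in> beta_row p (a + int n - 1)"
    proof (cases "x < a")
      case True
      define i where "i = nat (a + int n - 1 - x)"
      have "i \<ge> n" using True i_def by auto
      then have "p i = 0" using P(2) n_def by auto
      then have "x = int (p i) - int i + (a + int n - 1)" using True i_def by auto
      then show ?thesis unfolding mem_beta_row by blast
    next
      case False
      then have "nat (x - a) \<in> X" using x X_def by auto
      then have "nat (x - a) \<in> beta_nat p n" using P(3) n_def by simp
      then obtain i where i: "i < n" "nat (x - a) = p i + (n - 1 - i)"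
        unfolding beta_nat_def by blast
      then have "x = int (p i) - int i + (a + int n - 1)" using False by auto
      then show ?thesis unfolding mem_beta_row by blast
    qed
  next
    fix x assume "x \<in> beta_row p (a + int n - 1)"
    then obtain i where i: "x = int (p i) - int i + (a + int n - 1)" unfolding mem_beta_row by blast
    show "x \<in> A"
    proof (cases "i < n")
      case True
      then have "p i + (n - 1 - i) \<in> beta_nat p n" unfolding beta_nat_def by blast
      then have "p i + (n - 1 - i) \<in> X" using P(3) n_def by metis
      then obtain y where y: "y \<in> A" "y \<ge> a" "nat (y - a) = p i + (n - 1 - i)"
        unfolding X_def by auto
      then have "y = x" using i True by auto
      then show ?thesis using y by simp
    next
      case False
      then have "x < a" using i P(2) n_def by auto
      then show ?thesis using low by auto
    qed
  qed
  then show ?thesis using P(1) by blast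
qed

lemma beta_row_eq_beta_nat:
  assumes P: "is_partition p" and N: "\<forall>i\<ge>n. p i = 0"
  shows "beta_row p (int n - 1) = int ` beta_nat p n \<union> {x. x < 0}"
proof (intro set_eqI iffI)
  fix x assume "x \<in> beta_row p (int n - 1)"
  then obtain i where i: "x = int (p i) - int i + (int n - 1)" unfolding mem_beta_row by blast
  show "x \<in> int ` beta_nat p n \<union> {x. x < 0}"
  proof (cases "i < n")
    case True
    then have "x = int (p i + (n - 1 - i))" using i by auto
    then show ?thesis using True unfolding beta_nat_def by blast
  next
    case False then show ?thesis using i N by auto
  qed
next
  fix x assume "x \<in> int ` beta_nat p n \<union> {x. x < 0}"
  then show "x \<in> beta_row p (int n - 1)"
  proof
    assume "x \<in> int ` beta_nat p n"
    then obtain i where "i < n" "x = int (p i + (n - 1 - i))" unfolding beta_nat_def by auto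
    then have "x = int (p i) - int i + (int n - 1)" by auto
    then show ?thesis unfolding mem_beta_row by blast
  next
    assume x: "x \<in> {x. x < 0}"
    define i where "i = nat (int n - 1 - x)"
    have "i \<ge> n" using x i_def by auto
    then have "x = int (p i) - int i + (int n - 1)" using N x i_def by auto
    then show ?thesis unfolding mem_beta_row by blast
  qed
qed

lemma beta_nat_inject:
  assumes P: "is_partition p" "\<forall>i\<ge>n. p i = 0" and Q: "is_partition q" "\<forall>i\<ge>n. q i = 0"
    and eq: "beta_nat p n = beta_nat q n"
  shows "p = q"
proof -
  have "beta_row p (int n - 1) = beta_row q (int n - 1)"
    using beta_row_eq_beta_nat[OF P] beta_row_eq_beta_nat[OF Q] eq by simp
  then show ?thesis using abacus_part_beta_row[OF P(1)] abacus_part_beta_row[OF Q(1)] by metis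
qed

lemma card_beta_nat:
  assumes P: "is_partition p"
  shows "card (beta_nat p n) = n"
proof -
  have "beta_nat p n = (\<lambda>i. p i + (n - 1 - i)) ` {..<n}" unfolding beta_nat_def by blast
  moreover have "inj_on (\<lambda>i. p i + (n - 1 - i)) {..<n}"
  proof (rule inj_onI)
    fix i k assume "i \<in> {..<n}" "k \<in> {..<n}" "p i + (n - 1 - i) = p k + (n - 1 - k)"
    then have "int (p k) - int k + 0 = int (p i) - int i + 0" by auto
    then show "i = k" using partition_beta_eq_iff[OF P] by blast
  qed
  ultimately show ?thesis by (metis card_image card_lessThan)
qed

lemma part_of_beta_spec:
  assumes "finite X"
  shows "is_partition (part_of_beta X) \<and> (\<forall>i\<ge>card X. part_of_beta X i = 0)
     \<and> beta_nat (part_of_beta X) (card X) = X"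
proof -
  obtain p where p: "is_partition p \<and> (\<forall>i\<ge>card X. p i = 0) \<and> beta_nat p (card X) = X"
    using ex_partition_beta_nat[OF assms] by blast
  show ?thesis unfolding part_of_beta_def
  proof (rule theI[of _ p])
    show "is_partition p \<and> (\<forall>i\<ge>card X. p i = 0) \<and> beta_nat p (card X) = X" by (rule p)
    fix q assume "is_partition q \<and> (\<forall>i\<ge>card X. q i = 0) \<and> beta_nat q (card X) = X"
    then show "q = p" using p beta_nat_inject by metis
  qed
qed

lemma part_of_beta_beta_nat:
  assumes P: "is_partition p" and N: "\<forall>i\<ge>n. p i = 0"
  shows "part_of_beta (beta_nat p n) = p"
proof -
  have fin: "finite (beta_nat p n)" unfolding beta_nat_def by auto
  have c: "card (beta_nat p n) = n" by (rule card_beta_nat[OF P])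
  show ?thesis using part_of_beta_spec[OF fin] unfolding c
    using beta_nat_inject[OF _ _ P N] by metis
qed

section \<open>Sliding a bead removes a rim hook\<close>

lemma cell_adj_sym: "(a, b) \<in> cell_adj S \<Longrightarrow> (b, a) \<in> cell_adj S"
  unfolding cell_adj_def by (auto simp: abs_minus_commute)

lemma cell_adj_rtrancl_sym: "(a, b) \<in> (cell_adj S)\<^sup>* \<Longrightarrow> (b, a) \<in> (cell_adj S)\<^sup>*"
proof (induction rule: rtrancl_induct)
  case (step y z)
  then show ?case using cell_adj_sym by (meson converse_rtrancl_into_rtrancl)
qed simp

text \<open>Every cell is linked to the first cell (s, q s) of the bottom row: first along its row
  to the left, then upwards row by row, since row i ends exactly below the start of row i + 1.\<close>
lemma skew_strip_connected:
  fixes p q :: "nat \<Rightarrow> nat" and r s :: nat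
  defines "S \<equiv> Sigma {r..s} (\<lambda>i. {q i..<p i})"
  assumes Q: "is_partition q"
    and inside: "\<And>i. r \<le> i \<Longrightarrow> i < s \<Longrightarrow> q i + 1 = p (Suc i)"
    and rows: "\<And>i. r \<le> i \<Longrightarrow> i \<le> s \<Longrightarrow> q i < p i"
  shows "\<forall>a\<in>S. \<forall>b\<in>S. (a, b) \<in> (cell_adj S)\<^sup>*"
proof -
  define R where "R = cell_adj S"
  have adj: "a \<in> S \<Longrightarrow> b \<in> S \<Longrightarrow> \<bar>int (fst a) - int (fst b)\<bar> + \<bar>int (snd a) - int (snd b)\<bar> = 1
     \<Longrightarrow> (a, b) \<in> R\<^sup>*" for a b unfolding R_def cell_adj_def by auto
  have to_row_start: "(i, j) \<in> S \<Longrightarrow> ((i, j), (i, q i)) \<in> R\<^sup>*" for i j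
  proof (induction j)
    case (Suc j)
    show ?case
    proof (cases "q i = Suc j")
      case False
      then have "(i, j) \<in> S" using Suc.prems by (auto simp: S_def)
      moreover have "((i, Suc j), (i, j)) \<in> R\<^sup>*" using adj[of "(i, Suc j)" "(i, j)"] Suc.prems calculation by simp
      ultimately show ?thesis using Suc.IH by (meson rtrancl_trans)
    qed simp
  qed (simp add: S_def)
  have down: "r \<le> i \<Longrightarrow> i \<le> s \<Longrightarrow> ((i, q i), (s, q s)) \<in> R\<^sup>*" for i
  proof (induction "s - i" arbitrary: i)
    case (Suc d)
    then have "i < s" by simp
    have below: "(Suc i, q i) \<in> S"
      using Suc.prems \<open>i < s\<close> inside[of i] Q[unfolded is_partition_def] by (auto simp: S_def)
    have "((i, q i), (Suc i, q i)) \<in> R\<^sup>*"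
      using adj[OF _ below] rows[of i] Suc.prems by (simp add: S_def)
    moreover have "((Suc i, q i), (Suc i, q (Suc i))) \<in> R\<^sup>*" using to_row_start[OF below] .
    moreover have "((Suc i, q (Suc i)), (s, q s)) \<in> R\<^sup>*"
      using Suc.hyps(1)[of "Suc i"] Suc.hyps(2) Suc.prems \<open>i < s\<close> by simp
    ultimately show ?case by (meson rtrancl_trans)
  qed simp
  have "(a, (s, q s)) \<in> R\<^sup>*" if "a \<in> S" for a
  proof -
    obtain i j where a: "a = (i, j)" "r \<le> i" "i \<le> s" using \<open>a \<in> S\<close> by (auto simp: S_def)
    then show ?thesis using to_row_start[of i j] down[of i] that by (meson rtrancl_trans)
  qed
  then show ?thesis using cell_adj_rtrancl_sym unfolding R_def by (meson rtrancl_trans)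
qed

text \<open>Hypothesis inside says that row i of the skew shape starts in the column where row i + 1
  ends.\<close>
lemma border_strip_removes_hook:
  assumes P: "is_partition p" and Q: "is_partition q" and rs: "r \<le> s"
    and outside: "\<And>i. i < r \<or> s < i \<Longrightarrow> q i = p i"
    and inside: "\<And>i. r \<le> i \<Longrightarrow> i < s \<Longrightarrow> q i + 1 = p (Suc i)"
    and last: "q s < p s"
    and e: "int e = int (p r) - int (q s) + int s - int r"
  shows "removes_hook e p q"
proof -
  have rows: "q i < p i" if "r \<le> i" "i \<le> s" for i
  proof (cases "i < s")
    case True then show ?thesis using inside[OF that(1) True] partition_antimono[OF P, of i "Suc i"] by simp
  qed (use last that in simp)
  have le: "q i \<le> p i" for i using rows outside by (metis less_imp_le not_le)
  define S where "S = diagram p - diagram q"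
  have mem_S: "(i, j) \<in> S \<longleftrightarrow> r \<le> i \<and> i \<le> s \<and> q i \<le> j \<and> j < p i" for i j
  proof -
    have "(i, j) \<in> S \<longleftrightarrow> q i \<le> j \<and> j < p i" by (auto simp: S_def diagram_def)
    moreover have "q i < p i \<Longrightarrow> r \<le> i \<and> i \<le> s" using outside[of i] by force
    ultimately show ?thesis by auto
  qed
  then have S: "S = Sigma {r..s} (\<lambda>i. {q i..<p i})" by auto
  have "card S = (\<Sum>i\<in>{r..s}. p i - q i)" by (simp add: S)
  then have "int (card S) = (\<Sum>i\<in>{r..s}. int (p i) - int (q i))" using le by simp
  also have "\<dots> = (\<Sum>i\<in>{r..<s}. int (p i) - int (q i)) + (int (p s) - int (q s))"
    using rs by (simp add: atLeastLessThanSuc_atLeastAtMost[symmetric])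
  also have "(\<Sum>i\<in>{r..<s}. int (p i) - int (q i)) = (\<Sum>i\<in>{r..<s}. (int (p i) - int (p (Suc i))) + 1)"
  proof (rule sum.cong)
    fix i assume "i \<in> {r..<s}"
    then have "int (q i) + 1 = int (p (Suc i))" using inside[of i] by simp
    then show "int (p i) - int (q i) = int (p i) - int (p (Suc i)) + 1" by simp
  qed simp
  also have "\<dots> = int (p r) - int (p s) + int (s - r)"
    using sum_Suc_diff'[OF rs, of "\<lambda>i. - int (p i)"] by (simp add: sum.distrib)
  finally have card: "card S = e" using e rs by simp
  have no_square: "\<not> (\<exists>i j. {(i, j), (Suc i, j), (i, Suc j), (Suc i, Suc j)} \<subseteq> S)"
  proof
    assume "\<exists>i j. {(i, j), (Suc i, j), (i, Suc j), (Suc i, Suc j)} \<subseteq> S"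
    then obtain i j where "(i, j) \<in> S" "(Suc i, Suc j) \<in> S" by auto
    then show False using inside[of i] by (auto simp: mem_S)
  qed
  have "diagram q \<subseteq> diagram p" using le by (auto simp: diagram_def intro: less_le_trans)
  then show ?thesis
    unfolding removes_hook_def Let_def S_def[symmetric]
    using P Q card no_square skew_strip_connected[OF Q inside rows] unfolding S by blast
qed

text \<open>The partition whose beta row arises by sliding the bead of row r down to position
  m - s + c, the gap just below the bead of row s: rows r + 1, ..., s move up by one.\<close>
definition slide_part :: "(nat \<Rightarrow> nat) \<Rightarrow> nat \<Rightarrow> nat \<Rightarrow> nat \<Rightarrow> nat \<Rightarrow> nat" where
  "slide_part p r s m i = (if i < r \<or> s < i then p i else if i < s then p (Suc i) - 1 else m)"

lemma slide_part_inside: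
  assumes P: "is_partition p" and "m < p s" and "r \<le> i" "i < s"
  shows "slide_part p r s m i + 1 = p (Suc i)"
  using assms partition_antimono[OF P, of "Suc i" s] by (simp add: slide_part_def)

lemma is_partition_slide_part:
  assumes P: "is_partition p" and rs: "r \<le> s" and m: "p (Suc s) \<le> m" "m < p s"
  shows "is_partition (slide_part p r s m)"
proof -
  let ?q = "slide_part p r s m"
  have "?q (Suc i) \<le> ?q i" for i
  proof -
    consider "Suc i < r" | "Suc i = r" | "r \<le> i" "Suc i < s" | "r \<le> i" "Suc i = s" | "s \<le> i"
      by linarith
    then show ?thesis
    proof cases
      case 2
      then show ?thesis using partition_antimono[OF P, of i "Suc (Suc i)"] partition_antimono[OF P, of i s]
        m rs by (auto simp: slide_part_def)
    next
      case 3
      then show ?thesis using partition_antimono[OF P, of "Suc i" "Suc (Suc i)"]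
        slide_part_inside[OF P m(2), of r "Suc i"] by (simp add: slide_part_def)
    qed (use partition_antimono[OF P] m in \<open>auto simp: slide_part_def\<close>)
  qed
  moreover obtain N where "\<forall>i\<ge>N. p i = 0" using partition_eventually_zero[OF P] by blast
  then have "\<forall>i\<ge>max N (Suc s). ?q i = 0" by (simp add: slide_part_def)
  ultimately show ?thesis unfolding is_partition_def by blast
qed
lemma beta_row_slide_part:
  assumes P: "is_partition p" and rs: "r \<le> s" and m: "p (Suc s) \<le> m" "m < p s"
  shows "beta_row (slide_part p r s m) c
           = insert (int m - int s + c) (beta_row p c - {int (p r) - int r + c})"
proof -
  define f where "f k = int (p k) - int k + c" for k
  have "f = (\<lambda>k. int (p k) - int k + c)" by (auto simp: f_def)
  then have inj: "inj f" using inj_partition_beta[OF P] by simp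
  have f_less: "f k < f i \<longleftrightarrow> i < k" for i k using partition_beta_less_iff[OF P] f_def by simp
  let ?new = "int m - int s + c"
  have new: "?new \<noteq> f k" for k
  proof (cases "k \<le> s")
    case True then show ?thesis using m(2) f_less[of k s] by (cases "k = s") (auto simp: f_def)
  next
    case False then show ?thesis using m(1) f_less[of k "Suc s"] by (cases "k = Suc s") (auto simp: f_def)
  qed
  have beta_row: "beta_row p' c = range (\<lambda>i. int (p' i) - int i + c)" for p'
    by (auto simp: beta_row_def)
  define g where "g i = int (slide_part p r s m i) - int i + c" for i
  have "UNIV = {i. i < r \<or> s < i} \<union> {r..<s} \<union> {s}" by auto
  then have "range g = g ` {i. i < r \<or> s < i} \<union> g ` {r..<s} \<union> {g s}" by (metis image_Un image_insert image_empty)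
  moreover have "g ` {i. i < r \<or> s < i} = f ` {i. i < r \<or> s < i}"
    by (rule image_cong) (auto simp: g_def f_def slide_part_def)
  moreover have "g ` {r..<s} = f ` Suc ` {r..<s}"
    unfolding image_image
  proof (rule image_cong)
    fix i assume "i \<in> {r..<s}"
    then have "int (slide_part p r s m i) + 1 = int (p (Suc i))"
      using slide_part_inside[OF P m(2), of r i] by (metis atLeastLessThan_iff of_nat_1 of_nat_add)
    then show "g i = f (Suc i)" by (simp add: g_def f_def)
  qed simp
  moreover have "g s = ?new" using rs by (simp add: g_def slide_part_def)
  ultimately have "range g = f ` {i. i < r \<or> s < i} \<union> f ` Suc ` {r..<s} \<union> {?new}" by simp
  also have "{i. i < r \<or> s < i} \<union> Suc ` {r..<s} = UNIV - {r}"
    using rs by (auto simp: image_iff intro!: bexI[of _ "_ - 1"])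
  then have "f ` {i. i < r \<or> s < i} \<union> f ` Suc ` {r..<s} = range f - {f r}"
    using image_set_diff[OF inj] by (metis image_Un image_empty image_insert)
  finally show ?thesis unfolding beta_row g_def[symmetric] f_def[symmetric] using new by auto
qed

lemma beta_row_gap_below:
  assumes P: "is_partition p" and y: "y \<notin> beta_row p c" "y < int (p r) - int r + c"
  shows "\<exists>s\<ge>r. int (p (Suc s)) - int (Suc s) + c < y \<and> y < int (p s) - int s + c"
proof -
  define f where "f k = int (p k) - int k + c" for k
  obtain N where N: "\<forall>i\<ge>N. p i = 0" using partition_eventually_zero[OF P] by blast
  define K where "K = {k. y < f k}"
  have "K \<subseteq> {..< max N (nat (c - y) + 1)}"
  proof
    fix k assume k: "k \<in> K"
    show "k \<in> {..< max N (nat (c - y) + 1)}"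
    proof (rule ccontr)
      assume "\<not> ?thesis"
      then have "p k = 0" "int k \<ge> c - y + 1" using N by auto
      then show False using k by (simp add: K_def f_def)
    qed
  qed
  then have fin: "finite K" by (rule finite_subset) simp
  have "r \<in> K" using y by (simp add: K_def f_def)
  define s where "s = Max K"
  have "s \<in> K" "r \<le> s" using Max_in[OF fin] Max_ge[OF fin \<open>r \<in> K\<close>] \<open>r \<in> K\<close> by (auto simp: s_def)
  moreover have "Suc s \<notin> K" using Max_ge[OF fin, of "Suc s"] by (auto simp: s_def)
  moreover have "f (Suc s) \<noteq> y" using y(1) unfolding mem_beta_row f_def by metis
  ultimately show ?thesis by (intro exI[of _ s]) (auto simp: K_def f_def)
qed

lemma beta_row_slide_removes_hook:
  assumes P: "is_partition p" and x: "x \<in> beta_row p c" and gap: "x - int e \<notin> beta_row p c"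
    and "e > 0"
  shows "\<exists>q. is_partition q \<and> beta_row q c = insert (x - int e) (beta_row p c - {x})
             \<and> removes_hook e p q"
proof -
  obtain r where r: "x = int (p r) - int r + c" using x by (auto simp: mem_beta_row)
  have "x - int e < int (p r) - int r + c" using r \<open>e > 0\<close> by simp
  then obtain s where s: "r \<le> s" "int (p (Suc s)) - int (Suc s) + c < x - int e"
      "x - int e < int (p s) - int s + c"
    using beta_row_gap_below[OF P gap] by blast
  define m where "m = nat (x - int e + int s - c)"
  have m: "int m = x - int e + int s - c" "p (Suc s) \<le> m" "m < p s" using s by (auto simp: m_def)
  define q where "q = slide_part p r s m"
  have "removes_hook e p q" unfolding q_def
  proof (rule border_strip_removes_hook[OF P is_partition_slide_part[OF P s(1) m(2,3)] s(1)])
    show "slide_part p r s m i = p i" if "i < r \<or> s < i" for i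
      using that by (simp add: slide_part_def)
  qed (use slide_part_inside[OF P m(3)] m r s(1) in \<open>auto simp: slide_part_def\<close>)
  moreover have "beta_row q c = insert (x - int e) (beta_row p c - {x})"
    unfolding q_def beta_row_slide_part[OF P s(1) m(2,3)] m(1) r by (simp add: algebra_simps)
  ultimately show ?thesis using is_partition_slide_part[OF P s(1) m(2,3)] q_def by blast
qed

lemma abacus_part_slide_removes_hook:
  assumes P: "is_partition p" and x: "x \<in> beta_row p c" and y: "x - int e \<notin> beta_row p c"
    and e: "e > 0"
  shows "removes_hook e (abacus_part (beta_row p c)) (abacus_part (insert (x - int e) (beta_row p c - {x})))"
proof -
  obtain q where q: "is_partition q" "beta_row q c = insert (x - int e) (beta_row p c - {x})"
    "removes_hook e p q" using beta_row_slide_removes_hook[OF P x y e] by blast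
  have "abacus_part (insert (x - int e) (beta_row p c - {x})) = q"
    using abacus_part_beta_row[OF q(1), of c] unfolding q(2) .
  then show ?thesis using q(3) abacus_part_beta_row[OF P] by simp
qed

section \<open>Dominoes and 2-cores\<close>

lemma is_partition_stair: "is_partition (stair t)"
  unfolding is_partition_def stair_def by (intro conjI allI exI[of _ t]) auto

lemma diagram_stair: "diagram (stair t) = {(i, j). i + j < t}"
  unfolding diagram_def stair_def by (auto split: if_splits)

lemma card_2_connected_adjacent:
  assumes c: "card S = 2" and conn: "\<forall>x\<in>S. \<forall>y\<in>S. (x, y) \<in> (cell_adj S)\<^sup>*"
  shows "\<exists>u v. S = {u, v} \<and> (u, v) \<in> cell_adj S"
proof -
  obtain u v where uv: "S = {u, v}" "u \<noteq> v" using c by (metis card_2_iff)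
  have "(u, v) \<in> (cell_adj S)\<^sup>*" using conn uv by auto
  then obtain w where w: "(u, w) \<in> cell_adj S" "(w, v) \<in> (cell_adj S)\<^sup>*"
    using uv(2) by (metis converse_rtranclE)
  have "w \<in> S" "w \<noteq> u" using w(1) unfolding cell_adj_def by auto
  then have "w = v" using uv by auto
  then show ?thesis using uv w by blast
qed

lemma removes_hook_2_domino:
  assumes "removes_hook 2 p q"
  obtains i j where "diagram p - diagram q = {(i, j), (i, Suc j)}"
    | i j where "diagram p - diagram q = {(i, j), (Suc i, j)}"
proof -
  let ?S = "diagram p - diagram q"
  have "card ?S = 2" "\<forall>x\<in>?S. \<forall>y\<in>?S. (x, y) \<in> (cell_adj ?S)\<^sup>*"
    using assms unfolding removes_hook_def Let_def by auto
  then obtain u v where S: "?S = {u, v}" and adj: "(u, v) \<in> cell_adj ?S"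
    using card_2_connected_adjacent by blast
  obtain a b a' b' where uv: "u = (a, b)" "v = (a', b')" by fastforce
  have "\<bar>int a - int a'\<bar> + \<bar>int b - int b'\<bar> = 1" using adj uv unfolding cell_adj_def by auto
  then consider "a' = Suc a" "b' = b" | "a = Suc a'" "b' = b" | "a = a'" "b' = Suc b" | "a = a'" "b = Suc b'"
    by arith
  then show ?thesis
  proof cases
    case 1 then show ?thesis using that(2)[of a b] S uv by simp
  next
    case 2 then show ?thesis using that(2)[of a' b] S uv by (simp add: insert_commute)
  next
    case 3 then show ?thesis using that(1)[of a b] S uv by simp
  next
    case 4 then show ?thesis using that(1)[of a b'] S uv by (simp add: insert_commute)
  qed
qed

lemma not_removes_hook_2_stair: "\<not> removes_hook 2 (stair t) q"
proof
  assume h: "removes_hook 2 (stair t) q"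
  then have "is_partition q" unfolding removes_hook_def by simp
  then have q_mono: "q (Suc i) \<le> q i" for i unfolding is_partition_def by simp
  have S: "diagram (stair t) - diagram q = {(i, j). i + j < t \<and> q i \<le> j}"
    unfolding diagram_stair by (auto simp: diagram_def)
  from h show False
  proof (cases rule: removes_hook_2_domino)
    case (1 i j)
    then have eq: "{(i, j), (i, Suc j)} = {(i, j). i + j < t \<and> q i \<le> j}" using S by simp
    have "(i, j) \<in> {(i, j). i + j < t \<and> q i \<le> j}" "(i, Suc j) \<in> {(i, j). i + j < t \<and> q i \<le> j}"
      unfolding eq[symmetric] by auto
    then have "(Suc i, j) \<in> {(i, j). i + j < t \<and> q i \<le> j}" using q_mono[of i] by auto
    then show False unfolding eq[symmetric] by auto
  next
    case (2 i j)
    then have eq: "{(i, j), (Suc i, j)} = {(i, j). i + j < t \<and> q i \<le> j}" using S by simp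
    have "(i, j) \<in> {(i, j). i + j < t \<and> q i \<le> j}" "(Suc i, j) \<in> {(i, j). i + j < t \<and> q i \<le> j}"
      unfolding eq[symmetric] by auto
    then have "(i, Suc j) \<in> {(i, j). i + j < t \<and> q i \<le> j}" by auto
    then show False unfolding eq[symmetric] by auto
  qed
qed

text \<open>The excess of cells of even content over cells of odd content is unchanged by removing a
  domino, and takes distinct values on distinct staircases.\<close>
definition signed_size :: "(nat \<Rightarrow> nat) \<Rightarrow> int" where
  "signed_size p = (\<Sum>(i, j)\<in>diagram p. (-1) ^ (i + j))"

lemma finite_diagram: "is_partition p \<Longrightarrow> finite (diagram p)"
proof -
  assume P: "is_partition p"
  obtain N where N: "\<forall>i\<ge>N. p i = 0" using partition_eventually_zero[OF P] by blast
  have "diagram p \<subseteq> {..<N} \<times> {..<p 0}"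
  proof
    fix x assume x: "x \<in> diagram p"
    obtain i j where ij: "x = (i, j)" by fastforce
    then have "j < p i" using x by (auto simp: diagram_def)
    moreover have "p i \<le> p 0" using partition_antimono[OF P] by simp
    moreover have "i < N" using N calculation by (metis not_le not_less0)
    ultimately show "x \<in> {..<N} \<times> {..<p 0}" using ij by auto
  qed
  then show ?thesis by (rule finite_subset) simp
qed

lemma signed_size_removes_domino:
  assumes h: "removes_hook 2 p q"
  shows "signed_size p = signed_size q"
proof -
  have P: "is_partition p" and sub: "diagram q \<subseteq> diagram p"
    using h unfolding removes_hook_def by auto
  have "(\<Sum>(i, j)\<in>diagram p - diagram q. (-1::int) ^ (i + j)) = 0"
    using h by (cases rule: removes_hook_2_domino) auto
  moreover have "signed_size p
      = signed_size q + (\<Sum>(i, j)\<in>diagram p - diagram q. (-1::int) ^ (i + j))"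
    unfolding signed_size_def using sum.subset_diff[OF sub finite_diagram[OF P]] by (simp add: add.commute)
  ultimately show ?thesis by simp
qed

lemma signed_size_removes_dominoes:
  "(p, q) \<in> {(a, b). removes_hook 2 a b}\<^sup>* \<Longrightarrow> signed_size p = signed_size q"
  by (induction rule: rtrancl_induct) (auto dest: signed_size_removes_domino)

lemma signed_size_stair: "signed_size (stair t) = (if even t then - (int t div 2) else (int t + 1) div 2)"
proof (induction t)
  case 0 then show ?case by (simp add: signed_size_def diagram_stair)
next
  case (Suc t)
  define A where "A = (\<lambda>i. (i, t - i)) ` {..t}"
  have un: "diagram (stair (Suc t)) = diagram (stair t) \<union> A"
    unfolding diagram_stair A_def by (auto simp: less_Suc_eq image_iff) 
  have disj: "diagram (stair t) \<inter> A = {}" unfolding diagram_stair A_def by auto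
  have fin: "finite (diagram (stair t))" by (rule finite_diagram[OF is_partition_stair])
  have finA: "finite A" unfolding A_def by simp
  have "(\<Sum>(i, j)\<in>A. (-1::int) ^ (i + j)) = (\<Sum>i\<in>{..t}. (-1) ^ t)"
    unfolding A_def by (subst sum.reindex) (auto simp: inj_on_def)
  also have "\<dots> = (int t + 1) * (-1) ^ t" by simp
  finally have sA: "(\<Sum>(i, j)\<in>A. (-1::int) ^ (i + j)) = (int t + 1) * (-1) ^ t" .
  have "signed_size (stair (Suc t)) = signed_size (stair t) + (int t + 1) * (-1) ^ t"
    unfolding signed_size_def un using sum.union_disjoint[OF fin finA disj, of "\<lambda>(i, j). (-1::int) ^ (i + j)"] sA
    by simp
  then show ?case using Suc by (auto elim!: evenE oddE)
qed

lemma has_core_2_stair_unique: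
  assumes "has_core 2 p (stair a)" "has_core 2 p (stair b)"
  shows "a = b"
proof -
  have "signed_size p = signed_size (stair a)" "signed_size p = signed_size (stair b)"
    using assms signed_size_removes_dominoes unfolding has_core_def by blast+
  then have "signed_size (stair a) = signed_size (stair b)" by simp
  then show ?thesis unfolding signed_size_stair
    by (auto split: if_splits elim!: evenE oddE)
qed

section \<open>Interleaving two abaci\<close>

definition interleave :: "int set \<Rightarrow> int set \<Rightarrow> int set" where
  "interleave C1 C2 = {2 * j + 1 | j. j \<in> C1} \<union> {2 * j | j. j \<in> C2}"

lemma mem_interleave: "z \<in> interleave C1 C2 \<longleftrightarrow> (odd z \<and> (z - 1) div 2 \<in> C1) \<or> (even z \<and> z div 2 \<in> C2)"
proof
  assume "z \<in> interleave C1 C2"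
  then show "(odd z \<and> (z - 1) div 2 \<in> C1) \<or> (even z \<and> z div 2 \<in> C2)"
    unfolding interleave_def by auto
next
  assume a: "(odd z \<and> (z - 1) div 2 \<in> C1) \<or> (even z \<and> z div 2 \<in> C2)"
  show "z \<in> interleave C1 C2"
  proof (cases "odd z")
    case True
    then have "z = 2 * ((z - 1) div 2) + 1" by presburger
    then show ?thesis using a True unfolding interleave_def by blast
  next
    case False
    then have "z = 2 * (z div 2)" by presburger
    then show ?thesis using a False unfolding interleave_def by blast
  qed
qed

lemma odd_mem_interleave[simp]: "2 * j + 1 \<in> interleave C1 C2 \<longleftrightarrow> j \<in> C1"
  unfolding mem_interleave by simp

lemma even_mem_interleave[simp]: "2 * j \<in> interleave C1 C2 \<longleftrightarrow> j \<in> C2"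
  unfolding mem_interleave by simp

lemma interleave_eqI:
  assumes "\<And>j. 2 * j + 1 \<in> A \<longleftrightarrow> j \<in> C1" and "\<And>j. 2 * j \<in> A \<longleftrightarrow> j \<in> C2"
  shows "A = interleave C1 C2"
proof (intro set_eqI)
  fix z :: int
  have "z = 2 * (z div 2) \<or> z = 2 * (z div 2) + 1" by presburger
  then show "z \<in> A \<longleftrightarrow> z \<in> interleave C1 C2"
    by (metis assms even_mem_interleave odd_mem_interleave)
qed

lemma mem_image_plus: "y \<in> (\<lambda>x. x + d) ` S \<longleftrightarrow> y - d \<in> (S :: int set)"
  by (auto intro: rev_image_eqI[of "y - d"])

lemma interleave_shift_even:
  "(\<lambda>x. x + 2 * k) ` interleave C1 C2 = interleave ((\<lambda>x. x + k) ` C1) ((\<lambda>x. x + k) ` C2)"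
proof (rule interleave_eqI)
  fix j :: int
  have "2 * j + 1 - 2 * k = 2 * (j - k) + 1" "2 * j - 2 * k = 2 * (j - k)" by simp_all
  then show "2 * j + 1 \<in> (\<lambda>x. x + 2 * k) ` interleave C1 C2 \<longleftrightarrow> j \<in> (\<lambda>x. x + k) ` C1"
    and "2 * j \<in> (\<lambda>x. x + 2 * k) ` interleave C1 C2 \<longleftrightarrow> j \<in> (\<lambda>x. x + k) ` C2"
    unfolding mem_image_plus by (metis odd_mem_interleave, metis even_mem_interleave)
qed

lemma interleave_shift_one: "(\<lambda>x. x + 1) ` interleave C1 C2 = interleave C2 ((\<lambda>x. x + 1) ` C1)"
proof (rule interleave_eqI)
  fix j :: int
  have "2 * j + 1 - 1 = 2 * j" "2 * j - 1 = 2 * (j - 1) + 1" by simp_all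
  then show "2 * j + 1 \<in> (\<lambda>x. x + 1) ` interleave C1 C2 \<longleftrightarrow> j \<in> C2"
    and "2 * j \<in> (\<lambda>x. x + 1) ` interleave C1 C2 \<longleftrightarrow> j \<in> (\<lambda>x. x + 1) ` C1"
    unfolding mem_image_plus by (metis even_mem_interleave, metis odd_mem_interleave)
qed

lemma card_interleave_atLeast:
  assumes "finite (C1 \<inter> {-K..})" "finite (C2 \<inter> {-K..})"
  shows "card (interleave C1 C2 \<inter> {-2 * K..}) = card (C1 \<inter> {-K..}) + card (C2 \<inter> {-K..})"
proof -
  have split: "interleave C1 C2 \<inter> {-2 * K..} = (\<lambda>j. 2 * j + 1) ` (C1 \<inter> {-K..}) \<union> (\<lambda>j. 2 * j) ` (C2 \<inter> {-K..})"
  proof (intro set_eqI iffI)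
    fix x assume x: "x \<in> interleave C1 C2 \<inter> {-2 * K..}"
    obtain m where "x = 2 * m \<or> x = 2 * m + 1" by (metis evenE oddE)
    then show "x \<in> (\<lambda>j. 2 * j + 1) ` (C1 \<inter> {-K..}) \<union> (\<lambda>j. 2 * j) ` (C2 \<inter> {-K..})"
      using x by auto
  qed auto
  have "2 * j + 1 \<noteq> 2 * j'" for j j' :: int by presburger
  then have "(\<lambda>j. 2 * j + 1) ` (C1 \<inter> {-K..}) \<inter> (\<lambda>j. 2 * j) ` (C2 \<inter> {-K..}) = {}" by blast
  then show ?thesis unfolding split using assms
    by (simp add: card_Un_disjoint card_image inj_on_def)
qed

lemma ex_beta_row_interleave:
  assumes P1: "is_partition r1" and P2: "is_partition r2"
  shows "\<exists>l c. is_partition l \<and> interleave (beta_row r1 k1) (beta_row r2 k2) = beta_row l c"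
proof -
  let ?I = "interleave (beta_row r1 k1) (beta_row r2 k2)"
  obtain a1 where a1: "\<forall>x<a1. x \<in> beta_row r1 k1" using beta_row_contains_below[OF P1] by blast
  obtain a2 where a2: "\<forall>x<a2. x \<in> beta_row r2 k2" using beta_row_contains_below[OF P2] by blast
  define a where "a = 2 * min a1 a2"
  have low: "{x. x < a} \<subseteq> ?I"
  proof
    fix x assume "x \<in> {x. x < a}"
    then have "x div 2 < a1" "x div 2 < a2" by (auto simp: a_def)
    moreover have "x = 2 * (x div 2) \<or> x = 2 * (x div 2) + 1" by presburger
    ultimately show "x \<in> ?I" using a1 a2 by (metis even_mem_interleave odd_mem_interleave)
  qed
  define M where "M = max (int (r1 0) + k1) (int (r2 0) + k2)"
  have "x \<le> 2 * M + 1" if "x \<in> ?I" for x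
  proof -
    have "x = 2 * (x div 2) \<or> x = 2 * (x div 2) + 1" by presburger
    then have "x div 2 \<in> beta_row r1 k1 \<or> x div 2 \<in> beta_row r2 k2"
      using that by (metis even_mem_interleave odd_mem_interleave)
    then have "x div 2 \<le> M"
      using beta_row_bounded_above[OF P1] beta_row_bounded_above[OF P2] unfolding M_def by fastforce
    moreover have "x \<le> 2 * (x div 2) + 1" by presburger
    ultimately show ?thesis by linarith
  qed
  then have "?I \<inter> {a..} \<subseteq> {a..2 * M + 1}" by auto
  then have "finite (?I \<inter> {a..})" using finite_subset by blast
  then show ?thesis by (rule abacus_eq_beta_row[OF low])
qed

lemma interleave_beta_row:
  assumes P1: "is_partition r1" and P2: "is_partition r2"
  shows "\<exists>l. is_partition l \<and> interleave (beta_row r1 k1) (beta_row r2 k2) = beta_row l (k1 + k2 + 1)"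
proof -
  obtain l c where L: "is_partition l" "interleave (beta_row r1 k1) (beta_row r2 k2) = beta_row l c"
    using ex_beta_row_interleave[OF P1 P2] by blast
  obtain T0 where T0: "\<forall>T\<le>T0. card (beta_row l c \<inter> {T..}) = nat (c - T) + 1"
    using card_beta_row_atLeast[OF L(1)] by blast
  obtain T1 where T1: "\<forall>T\<le>T1. card (beta_row r1 k1 \<inter> {T..}) = nat (k1 - T) + 1"
    using card_beta_row_atLeast[OF P1] by blast
  obtain T2 where T2: "\<forall>T\<le>T2. card (beta_row r2 k2 \<inter> {T..}) = nat (k2 - T) + 1"
    using card_beta_row_atLeast[OF P2] by blast
  have "\<exists>K. -K \<le> T1 \<and> -K \<le> T2 \<and> -2*K \<le> T0 \<and> 0 \<le> k1 + K \<and> 0 \<le> k2 + K \<and> 0 \<le> c + 2 * K"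
    by presburger
  then obtain K where K: "-K \<le> T1" "-K \<le> T2" "-2*K \<le> T0" "0 \<le> k1 + K" "0 \<le> k2 + K" "0 \<le> c + 2 * K"
    by blast
  have C1: "card (beta_row r1 k1 \<inter> {-K..}) = nat (k1 + K) + 1" using T1 K by simp
  have C2: "card (beta_row r2 k2 \<inter> {-K..}) = nat (k2 + K) + 1" using T2 K by simp
  have fin: "finite (beta_row r1 k1 \<inter> {-K..})" "finite (beta_row r2 k2 \<inter> {-K..})"
    by (rule card_ge_0_finite, simp add: C1 C2)+
  have "nat (c + 2 * K) + 1 = card (beta_row l c \<inter> {-2 * K..})" using T0 K by simp
  also have "\<dots> = nat (k1 + K) + 1 + (nat (k2 + K) + 1)"
    unfolding L(2)[symmetric] C1[symmetric] C2[symmetric]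
    by (rule card_interleave_atLeast[OF fin])
  finally have "c = k1 + k2 + 1" using K by linarith
  then show ?thesis using L by blast
qed

definition interleave_part :: "(nat \<Rightarrow> nat) \<Rightarrow> (nat \<Rightarrow> nat) \<Rightarrow> int \<Rightarrow> int \<Rightarrow> nat \<Rightarrow> nat" where
  "interleave_part r1 r2 k1 k2 = abacus_part (interleave (beta_row r1 k1) (beta_row r2 k2))"

lemma interleave_part_beta_row:
  assumes "is_partition r1" "is_partition r2"
  shows "is_partition (interleave_part r1 r2 k1 k2) \<and>
         interleave (beta_row r1 k1) (beta_row r2 k2) = beta_row (interleave_part r1 r2 k1 k2) (k1 + k2 + 1)"
proof -
  obtain l where l: "is_partition l" "interleave (beta_row r1 k1) (beta_row r2 k2) = beta_row l (k1 + k2 + 1)"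
    using interleave_beta_row[OF assms] by blast
  then have "interleave_part r1 r2 k1 k2 = l" unfolding interleave_part_def using abacus_part_beta_row by simp
  then show ?thesis using l by simp
qed

lemma interleave_part_shift:
  assumes "is_partition r1" "is_partition r2"
  shows "interleave_part r1 r2 (k1 + k) (k2 + k) = interleave_part r1 r2 k1 k2"
proof -
  have "interleave (beta_row r1 (k1 + k)) (beta_row r2 (k2 + k))
      = (\<lambda>x. x + 2 * k) ` interleave (beta_row r1 k1) (beta_row r2 k2)"
    by (simp add: interleave_shift_even beta_row_shift)
  also have "\<dots> = (\<lambda>x. x + 2 * k) ` beta_row (interleave_part r1 r2 k1 k2) (k1 + k2 + 1)"
    using interleave_part_beta_row[OF assms] by simp
  finally show ?thesis
    unfolding interleave_part_def[of r1 r2 "k1 + k"] using abacus_part_beta_row_shift interleave_part_beta_row[OF assms] by simp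
qed

lemma interleave_part_swap:
  assumes "is_partition r1" "is_partition r2"
  shows "interleave_part r2 r1 k2 (k1 + 1) = interleave_part r1 r2 k1 k2"
proof -
  have "interleave (beta_row r2 k2) (beta_row r1 (k1 + 1))
      = (\<lambda>x. x + 1) ` interleave (beta_row r1 k1) (beta_row r2 k2)"
    by (simp add: interleave_shift_one beta_row_shift)
  also have "\<dots> = (\<lambda>x. x + 1) ` beta_row (interleave_part r1 r2 k1 k2) (k1 + k2 + 1)"
    using interleave_part_beta_row[OF assms] by simp
  finally show ?thesis
    unfolding interleave_part_def[of r2 r1] using abacus_part_beta_row_shift interleave_part_beta_row[OF assms] by simp
qed

lemma beta_row_zero: "beta_row (\<lambda>_. 0) k = {..k}"
proof (intro set_eqI iffI)
  fix x assume "x \<in> beta_row (\<lambda>_. 0) k" then show "x \<in> {..k}" unfolding mem_beta_row by auto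
next
  fix x assume "x \<in> {..k}"
  then have "x = int ((\<lambda>_. 0::nat) (nat (k - x))) - int (nat (k - x)) + k" by simp
  then show "x \<in> beta_row (\<lambda>_. 0) k" unfolding mem_beta_row by blast
qed

lemma beta_row_stair: "beta_row (stair d) (int d + 1) = interleave {..int d} {..0}"
proof (rule interleave_eqI)
  define row where "row i = int (stair d i) - int i + (int d + 1)" for i
  have low: "i < d \<Longrightarrow> row i = 2 * (int d - int i) + 1" and high: "\<not> i < d \<Longrightarrow> row i = int d + 1 - int i" for i
    by (simp_all add: row_def stair_def)
  have mem: "z \<in> beta_row (stair d) (int d + 1) \<longleftrightarrow> (\<exists>i. z = row i)" for z
    unfolding mem_beta_row row_def ..
  fix j :: int
  show "2 * j + 1 \<in> beta_row (stair d) (int d + 1) \<longleftrightarrow> j \<in> {..int d}"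
    unfolding mem
  proof
    assume "\<exists>i. 2 * j + 1 = row i"
    then obtain i where i: "2 * j + 1 = row i" by blast
    show "j \<in> {..int d}"
    proof (cases "i < d")
      case True then show ?thesis using i low[of i] by simp
    next
      case False then show ?thesis using i high[of i] by simp
    qed
  next
    assume j: "j \<in> {..int d}"
    show "\<exists>i. 2 * j + 1 = row i"
    proof (cases "0 < j")
      case True
      then have "nat (int d - j) < d" using j by simp
      then show ?thesis using low[of "nat (int d - j)"] j by (intro exI[of _ "nat (int d - j)"]) simp
    next
      case False
      then have "\<not> nat (int d - 2 * j) < d" by simp
      then show ?thesis using high[of "nat (int d - 2 * j)"] False by (intro exI[of _ "nat (int d - 2 * j)"]) simp
    qed
  qed
  show "2 * j \<in> beta_row (stair d) (int d + 1) \<longleftrightarrow> j \<in> {..0}"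
    unfolding mem
  proof
    assume "\<exists>i. 2 * j = row i"
    then obtain i where i: "2 * j = row i" by blast
    show "j \<in> {..0}"
    proof (cases "i < d")
      case True then show ?thesis using i low[of i] by presburger
    next
      case False then show ?thesis using i high[of i] by simp
    qed
  next
    assume "j \<in> {..0}"
    then have "\<not> nat (int d + 1 - 2 * j) < d" by simp
    then show "\<exists>i. 2 * j = row i" using high \<open>j \<in> {..0}\<close> by (intro exI[of _ "nat (int d + 1 - 2 * j)"]) simp
  qed
qed

lemma interleave_part_zero: "interleave_part (\<lambda>_. 0) (\<lambda>_. 0) (int d) 0 = stair d"
  unfolding interleave_part_def beta_row_zero beta_row_stair[symmetric]
  by (rule abacus_part_beta_row[OF is_partition_stair])

section \<open>The 2-quotient of an interleaving\<close>

lemma partition_nonzero_eq_lessThan: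
  assumes P: "is_partition p"
  shows "{i. p i \<noteq> 0} = {..<plength p}"
proof -
  obtain N where "p N = 0" using partition_eventually_zero[OF P] by blast
  define m where "m = (LEAST i. p i = 0)"
  have "p m = 0" unfolding m_def by (rule LeastI[of _ N]) fact
  have "{i. p i \<noteq> 0} = {..<m}"
  proof (intro set_eqI iffI)
    fix i assume "i \<in> {i. p i \<noteq> 0}"
    then show "i \<in> {..<m}" using partition_antimono[OF P, of m i] \<open>p m = 0\<close> by (cases "m \<le> i") auto
  next
    fix i assume "i \<in> {..<m}"
    then show "i \<in> {i. p i \<noteq> 0}" using not_less_Least[of i "\<lambda>i. p i = 0"] by (simp add: m_def)
  qed
  then show ?thesis unfolding plength_def by simp
qed

lemma partition_eq_0_iff:
  assumes "is_partition p"
  shows "p i = 0 \<longleftrightarrow> plength p \<le> i"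
proof -
  have "i \<notin> {i. p i \<noteq> 0} \<longleftrightarrow> i \<notin> {..<plength p}"
    unfolding partition_nonzero_eq_lessThan[OF assms] ..
  then show ?thesis by (simp add: not_less)
qed

lemma part_of_beta_nonneg_beta_row:
  assumes P: "is_partition b" and neg: "{x. x < 0} \<subseteq> beta_row b k"
  shows "part_of_beta (nat ` (beta_row b k \<inter> {0..})) = b"
proof -
  define s where "s = plength b"
  have zero: "b i = 0 \<longleftrightarrow> s \<le> i" for i using partition_eq_0_iff[OF P] s_def by simp
  have "k - int s + 1 \<notin> beta_row b k"
  proof
    assume "k - int s + 1 \<in> beta_row b k"
    then obtain i where "k - int s + 1 = int (b i) - int i + k" unfolding mem_beta_row by blast
    then show False using zero[of i] by (cases "i < s") simp_all
  qed
  then have ks: "k - int s + 1 \<ge> 0" using neg by force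
  define m where "m = nat (k + 1)"
  have "s \<le> m" using ks by (simp add: m_def)
  then have zm: "\<forall>i\<ge>m. b i = 0" using zero by simp
  have "beta_row b k = int ` beta_nat b m \<union> {x. x < 0}"
    using beta_row_eq_beta_nat[OF P zm] ks by (simp add: m_def)
  then have "beta_row b k \<inter> {0..} = int ` beta_nat b m" by auto
  then have "nat ` (beta_row b k \<inter> {0..}) = beta_nat b m" by (simp add: image_image)
  then show ?thesis using part_of_beta_beta_nat[OF P zm] by simp
qed

lemma mem_nat_image_nonneg: "z \<in> nat ` (C \<inter> {0..}) \<longleftrightarrow> int z \<in> C"
  by (auto intro: image_eqI[of _ _ "int z"])

lemma mem_interleave_nat_image:
  assumes "interleave C1 C2 = int ` B \<union> {x. x < 0}"
  shows "n \<in> B \<longleftrightarrow> int n \<in> interleave C1 C2"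
  unfolding assms by (simp add: inj_image_mem_iff[OF inj_of_nat])

lemma even_halves_interleave:
  assumes I: "interleave C1 C2 = int ` B \<union> {x. x < 0}"
  shows "{x div 2 | x. x \<in> B \<and> even x} = nat ` (C2 \<inter> {0..})"
proof (intro set_eqI)
  fix z
  have "z \<in> {x div 2 | x. x \<in> B \<and> even x} \<longleftrightarrow> 2 * z \<in> B"
  proof
    assume "z \<in> {x div 2 | x. x \<in> B \<and> even x}"
    then obtain x where "z = x div 2" "x \<in> B" "even x" by blast
    then show "2 * z \<in> B" by simp
  next
    assume "2 * z \<in> B"
    then show "z \<in> {x div 2 | x. x \<in> B \<and> even x}" by (intro CollectI exI[of _ "2 * z"]) simp
  qed
  also have "\<dots> \<longleftrightarrow> 2 * int z \<in> interleave C1 C2" using mem_interleave_nat_image[OF I, of "2 * z"] by simp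
  finally show "z \<in> {x div 2 | x. x \<in> B \<and> even x} \<longleftrightarrow> z \<in> nat ` (C2 \<inter> {0..})"
    by (simp add: mem_nat_image_nonneg)
qed

lemma odd_halves_interleave:
  assumes I: "interleave C1 C2 = int ` B \<union> {x. x < 0}"
  shows "{(x - 1) div 2 | x. x \<in> B \<and> odd x} = nat ` (C1 \<inter> {0..})"
proof (intro set_eqI)
  fix z
  have "z \<in> {(x - 1) div 2 | x. x \<in> B \<and> odd x} \<longleftrightarrow> 2 * z + 1 \<in> B"
  proof
    assume "z \<in> {(x - 1) div 2 | x. x \<in> B \<and> odd x}"
    then obtain x where "z = (x - 1) div 2" "x \<in> B" "odd x" by blast
    moreover have "odd x \<Longrightarrow> 2 * ((x - 1) div 2) + 1 = x" by presburger
    ultimately show "2 * z + 1 \<in> B" by simp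
  next
    assume "2 * z + 1 \<in> B"
    then show "z \<in> {(x - 1) div 2 | x. x \<in> B \<and> odd x}" by (intro CollectI exI[of _ "2 * z + 1"]) simp
  qed
  also have "\<dots> \<longleftrightarrow> int z \<in> C1"
    unfolding mem_interleave_nat_image[OF I]
    by (simp only: of_nat_add of_nat_mult of_nat_numeral of_nat_1 odd_mem_interleave)
  finally show "z \<in> {(x - 1) div 2 | x. x \<in> B \<and> odd x} \<longleftrightarrow> z \<in> nat ` (C1 \<inter> {0..})"
    by (simp add: mem_nat_image_nonneg)
qed

text \<open>quot2 l uses the beta set with 2 * plength l + 1 beads, i.e. the beta row of charge
  2 * plength l.\<close>
lemma quot2_interleave:
  assumes L: "is_partition l" and A: "is_partition a" and B: "is_partition b"
    and eq: "beta_row l (2 * int (plength l)) = interleave (beta_row a ka) (beta_row b kb)"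
  shows "quot2 l = (b, a)"
proof -
  define n where "n = 2 * plength l + 1"
  have "\<forall>i\<ge>n. l i = 0" using partition_eq_0_iff[OF L] by (simp add: n_def)
  moreover have "int n - 1 = 2 * int (plength l)" by (simp add: n_def)
  ultimately have I: "interleave (beta_row a ka) (beta_row b kb) = int ` beta_nat l n \<union> {x. x < 0}"
    using beta_row_eq_beta_nat[OF L] eq by metis
  have "2 * x + 1 \<in> interleave (beta_row a ka) (beta_row b kb)" "2 * x \<in> interleave (beta_row a ka) (beta_row b kb)"
    if "x < 0" for x using that unfolding I by auto
  then have "{x. x < 0} \<subseteq> beta_row a ka" "{x. x < 0} \<subseteq> beta_row b kb" by auto
  then show ?thesis unfolding quot2_def Let_def n_def[symmetric]
      even_halves_interleave[OF I] odd_halves_interleave[OF I]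
    using part_of_beta_nonneg_beta_row[OF A] part_of_beta_nonneg_beta_row[OF B] by simp
qed

lemma quot2_bar_interleave_part:
  assumes R1: "is_partition r1" and R2: "is_partition r2"
  shows "quot2_bar d (interleave_part r1 r2 (int d) 0) = (r1, r2)"
proof -
  define l where "l = interleave_part r1 r2 (int d) 0"
  have L: "is_partition l" and Lb: "interleave (beta_row r1 (int d)) (beta_row r2 0) = beta_row l (int d + 1)"
    using interleave_part_beta_row[OF R1 R2, of "int d" 0] l_def by auto
  define w where "w = 2 * int (plength l) - int d - 1"
  have sh: "beta_row l (2 * int (plength l)) = (\<lambda>x. x + w) ` interleave (beta_row r1 (int d)) (beta_row r2 0)"
    unfolding Lb beta_row_shift w_def by simp
  show ?thesis
  proof (cases "even d")
    case False
    have "even w" using False unfolding w_def by simp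
    then obtain u where u: "w = 2 * u" by (auto elim!: evenE)
    have "beta_row l (2 * int (plength l)) = interleave (beta_row r1 (int d + u)) (beta_row r2 (0 + u))"
      unfolding sh u interleave_shift_even beta_row_shift by simp
    then have "quot2 l = (r2, r1)" using quot2_interleave[OF L R1 R2] by blast
    then show ?thesis using False l_def by (simp add: quot2_bar_def)
  next
    case True
    have "odd w" using True unfolding w_def by simp
    then obtain u where u: "w = 2 * u + 1" by (auto elim!: oddE)
    have comp: "(\<lambda>x. x + (2 * u + 1)) ` S = (\<lambda>x. x + 1) ` ((\<lambda>x. x + 2 * u) ` S)" for S :: "int set"
      by (simp add: image_image add.assoc)
    have "beta_row l (2 * int (plength l)) = interleave (beta_row r2 (0 + u)) (beta_row r1 (int d + u + 1))"
      unfolding sh u comp interleave_shift_even beta_row_shift interleave_shift_one by simp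
    then have "quot2 l = (r1, r2)" using quot2_interleave[OF L R2 R1] by blast
    then show ?thesis using True l_def by (simp add: quot2_bar_def)
  qed
qed

section \<open>The 2-core of an interleaving\<close>

lemma even_neq_odd_int [simp]: "(2::int) * a \<noteq> 2 * b + 1" "(2::int) * b + 1 \<noteq> 2 * a"
  by presburger+

lemma interleave_slide_fst:
  "interleave (insert y (C1 - {x})) C2 = insert (2 * y + 1) (interleave C1 C2 - {2 * x + 1})"
  by (rule sym, rule interleave_eqI) auto

lemma removes_hook_card_diagram:
  assumes "removes_hook e p q"
  shows "card (diagram q) + e = card (diagram p)"
proof -
  have P: "is_partition p" and sub: "diagram q \<subseteq> diagram p" and "card (diagram p - diagram q) = e"
    using assms unfolding removes_hook_def Let_def by auto
  then show ?thesis
    using card_Diff_subset[OF finite_subset[OF sub finite_diagram[OF P]] sub]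
      card_mono[OF finite_diagram[OF P] sub] by simp
qed

lemma partition_last_row:
  assumes P: "is_partition r" and nz: "r \<noteq> (\<lambda>_. 0)"
  shows "r (plength r - 1) > 0 \<and> r (Suc (plength r - 1)) = 0"
proof -
  have "plength r \<noteq> 0" using nz partition_eq_0_iff[OF P] by auto
  then have "\<not> plength r \<le> plength r - 1" by arith
  then show ?thesis
    using partition_eq_0_iff[OF P, of "plength r - 1"] partition_eq_0_iff[OF P, of "Suc (plength r - 1)"]
    by simp
qed

lemma partition_last_row_gap:
  assumes P: "is_partition r" and k: "r k > 0" "r (Suc k) = 0"
  shows "int (r k) - int k + c - 1 \<notin> beta_row r c"
proof
  assume "int (r k) - int k + c - 1 \<in> beta_row r c"
  then obtain i where i: "int (r k) - int k + c - 1 = int (r i) - int i + c" unfolding mem_beta_row by auto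
  show False
  proof (cases "i \<le> k")
    case True
    then show False using i partition_antimono[OF P True] by simp
  next
    case False
    then show False using i k partition_antimono[OF P, of "Suc k" i] by simp
  qed
qed

lemma interleave_part_slide_fst:
  assumes R1: "is_partition r1" and R2: "is_partition r2"
    and x: "x \<in> beta_row r1 k1" and gap: "x - int e \<notin> beta_row r1 k1" and "e > 0"
    and Q: "beta_row q k1 = insert (x - int e) (beta_row r1 k1 - {x})"
  shows "removes_hook (2 * e) (interleave_part r1 r2 k1 k2) (interleave_part q r2 k1 k2)"
proof -
  define l where "l = interleave_part r1 r2 k1 k2"
  have L: "is_partition l" "interleave (beta_row r1 k1) (beta_row r2 k2) = beta_row l (k1 + k2 + 1)"
    using interleave_part_beta_row[OF R1 R2] l_def by auto
  have shift: "2 * x + 1 - int (2 * e) = 2 * (x - int e) + 1" by simp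
  have "2 * x + 1 \<in> interleave (beta_row r1 k1) (beta_row r2 k2)"
    "2 * (x - int e) + 1 \<notin> interleave (beta_row r1 k1) (beta_row r2 k2)"
    using x gap by (simp_all only: odd_mem_interleave not_False_eq_True)
  then have "2 * x + 1 \<in> beta_row l (k1 + k2 + 1)" "2 * x + 1 - int (2 * e) \<notin> beta_row l (k1 + k2 + 1)"
    unfolding shift L(2) .
  from abacus_part_slide_removes_hook[OF L(1) this] \<open>e > 0\<close>
  have "removes_hook (2 * e) l
      (abacus_part (insert (2 * (x - int e) + 1) (beta_row l (k1 + k2 + 1) - {2 * x + 1})))"
    unfolding shift abacus_part_beta_row[OF L(1)] by simp
  also have "insert (2 * (x - int e) + 1) (beta_row l (k1 + k2 + 1) - {2 * x + 1})
      = interleave (beta_row q k1) (beta_row r2 k2)"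
    unfolding Q interleave_slide_fst L(2) ..
  finally show ?thesis unfolding l_def interleave_part_def .
qed

lemma interleave_part_domino_fst:
  assumes R1: "is_partition r1" and R2: "is_partition r2" and nz: "r1 \<noteq> (\<lambda>_. 0)"
  shows "\<exists>q. is_partition q \<and> card (diagram q) < card (diagram r1)
            \<and> removes_hook 2 (interleave_part r1 r2 k1 k2) (interleave_part q r2 k1 k2)"
proof -
  define k where "k = plength r1 - 1"
  have k: "r1 k > 0" "r1 (Suc k) = 0" using partition_last_row[OF R1 nz] by (simp_all add: k_def)
  define x where "x = int (r1 k) - int k + k1"
  have x: "x \<in> beta_row r1 k1" and gap: "x - int 1 \<notin> beta_row r1 k1"
    using partition_last_row_gap[OF R1 k, of k1] by (auto simp: x_def mem_beta_row)
  obtain q where "is_partition q" "beta_row q k1 = insert (x - int 1) (beta_row r1 k1 - {x})"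
    "removes_hook 1 r1 q" using beta_row_slide_removes_hook[OF R1 x gap] by auto
  then show ?thesis
    using interleave_part_slide_fst[OF R1 R2 x gap] removes_hook_card_diagram[of 1 r1 q] by auto
qed

lemma interleave_part_domino:
  assumes R1: "is_partition r1" and R2: "is_partition r2"
    and nz: "r1 \<noteq> (\<lambda>_. 0) \<or> r2 \<noteq> (\<lambda>_. 0)"
  shows "\<exists>q1 q2. is_partition q1 \<and> is_partition q2
    \<and> card (diagram q1) + card (diagram q2) < card (diagram r1) + card (diagram r2)
    \<and> removes_hook 2 (interleave_part r1 r2 k1 k2) (interleave_part q1 q2 k1 k2)"
proof (cases "r1 = (\<lambda>_. 0)")
  case False
  then obtain q where "is_partition q" "card (diagram q) < card (diagram r1)"
    "removes_hook 2 (interleave_part r1 r2 k1 k2) (interleave_part q r2 k1 k2)"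
    using interleave_part_domino_fst[OF R1 R2] by blast
  then show ?thesis using R2 by (intro exI[of _ q] exI[of _ r2]) simp
next
  case True
  then obtain q where q: "is_partition q" "card (diagram q) < card (diagram r2)"
    "removes_hook 2 (interleave_part r2 r1 k2 (k1 + 1)) (interleave_part q r1 k2 (k1 + 1))"
    using interleave_part_domino_fst[OF R2 R1] nz by blast
  then show ?thesis
    using R1 interleave_part_swap[OF R1 R2] interleave_part_swap[OF R1 q(1)]
    by (intro exI[of _ r1] exI[of _ q]) simp
qed

lemma has_core_interleave_part:
  assumes "is_partition r1" "is_partition r2"
  shows "has_core 2 (interleave_part r1 r2 (int d) 0) (stair d)"
  using assms
proof (induction "card (diagram r1) + card (diagram r2)" arbitrary: r1 r2 rule: less_induct)
  case less
  show ?case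
  proof (cases "r1 = (\<lambda>_. 0) \<and> r2 = (\<lambda>_. 0)")
    case True
    then show ?thesis
      unfolding has_core_def using interleave_part_zero is_partition_stair not_removes_hook_2_stair by auto
  next
    case False
    then obtain q1 q2 where q: "is_partition q1" "is_partition q2"
      "card (diagram q1) + card (diagram q2) < card (diagram r1) + card (diagram r2)"
      "removes_hook 2 (interleave_part r1 r2 (int d) 0) (interleave_part q1 q2 (int d) 0)"
      using interleave_part_domino[OF less.prems] by blast
    have "has_core 2 (interleave_part q1 q2 (int d) 0) (stair d)" using less.hyps[OF q(3) q(1) q(2)] .
    then show ?thesis using q(4) interleave_part_beta_row[OF less.prems] unfolding has_core_def
      by (auto intro: converse_rtrancl_into_rtrancl)
  qed
qed

section \<open>The map Phi\<close>

lemma ex_beta_row_residue_class: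
  assumes P: "is_partition p"
  shows "\<exists>q c'. is_partition q \<and> {j. 2 * j + b \<in> beta_row p c} = beta_row q c'"
proof -
  let ?C = "{j. 2 * j + b \<in> beta_row p c}"
  obtain x0 where x0: "\<forall>x<x0. x \<in> beta_row p c" using beta_row_contains_below[OF P] by blast
  have "\<exists>a. \<forall>j<a. 2 * j + b < x0" by presburger
  then obtain a where a: "\<forall>j<a. 2 * j + b < x0" by blast
  have "\<exists>U. \<forall>j. 2 * j + b \<le> int (p 0) + c \<longrightarrow> j \<le> U" by presburger
  then obtain U where U: "\<forall>j. 2 * j + b \<le> int (p 0) + c \<longrightarrow> j \<le> U" by blast
  have "{x. x < a} \<subseteq> ?C" using a x0 by auto
  moreover have "?C \<inter> {a..} \<subseteq> {a..U}" using U beta_row_bounded_above[OF P] by fastforce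
  then have "finite (?C \<inter> {a..})" using finite_subset by blast
  ultimately show ?thesis by (rule abacus_eq_beta_row)
qed

lemma partition_eq_interleave_part:
  assumes P: "is_partition p"
  shows "\<exists>r1 r2 k1 k2. is_partition r1 \<and> is_partition r2 \<and> p = interleave_part r1 r2 k1 k2"
proof -
  obtain r1 k1 where r1: "is_partition r1" "{j. 2 * j + 1 \<in> beta_row p 0} = beta_row r1 k1"
    using ex_beta_row_residue_class[OF P] by blast
  obtain r2 k2 where r2: "is_partition r2" "{j. 2 * j + 0 \<in> beta_row p 0} = beta_row r2 k2"
    using ex_beta_row_residue_class[OF P] by blast
  have "beta_row p 0 = interleave (beta_row r1 k1) (beta_row r2 k2)"
    by (rule interleave_eqI) (simp_all flip: r1(2) r2(2))
  then have "p = interleave_part r1 r2 k1 k2"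
    unfolding interleave_part_def using abacus_part_beta_row[OF P] by metis
  then show ?thesis using r1 r2 by blast
qed

lemma interleave_part_normal_form:
  fixes m n :: int
  assumes R1: "is_partition r1" and R2: "is_partition r2"
  defines "t \<equiv> if n \<le> m then nat (m - n) else nat (n - m - 1)"
    and "Q \<equiv> if n \<le> m then (r1, r2) else (r2, r1)"
  shows "interleave_part r1 r2 m n = interleave_part (fst Q) (snd Q) (int t) 0"
    and "has_core 2 (interleave_part r1 r2 m n) (stair t)"
    and "quot2_bar t (interleave_part r1 r2 m n) = Q"
proof -
  have "interleave_part r1 r2 m n = interleave_part (fst Q) (snd Q) (int t) 0"
  proof (cases "n \<le> m")
    case True
    then show ?thesis using interleave_part_shift[OF R1 R2, of "int t" n 0] by (simp add: t_def Q_def)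
  next
    case False
    then have "interleave_part r2 r1 n (m + 1) = interleave_part r2 r1 (int t) 0"
      using interleave_part_shift[OF R2 R1, of "int t" "m + 1" 0] by (simp add: t_def)
    then show ?thesis using interleave_part_swap[OF R1 R2] False by (simp add: Q_def)
  qed
  moreover have "is_partition (fst Q)" "is_partition (snd Q)" using R1 R2 by (simp_all add: Q_def)
  ultimately show "interleave_part r1 r2 m n = interleave_part (fst Q) (snd Q) (int t) 0"
    and "has_core 2 (interleave_part r1 r2 m n) (stair t)"
    and "quot2_bar t (interleave_part r1 r2 m n) = Q"
    using has_core_interleave_part quot2_bar_interleave_part by simp_all
qed

lemma Phi_eq_interleave_part:
  assumes m: "is_bipartition m"
  shows "Phi t m = interleave_part (fst m) (snd m) (int t) 0"
  unfolding Phi_def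
proof (rule the_equality)
  have R: "is_partition (fst m)" "is_partition (snd m)" using m is_bipartition_def by auto
  show "is_partition (interleave_part (fst m) (snd m) (int t) 0)
      \<and> has_core 2 (interleave_part (fst m) (snd m) (int t) 0) (stair t)
      \<and> quot2_bar t (interleave_part (fst m) (snd m) (int t) 0) = m"
    using interleave_part_beta_row[OF R] has_core_interleave_part[OF R] quot2_bar_interleave_part[OF R]
    by simp
next
  fix p assume p: "is_partition p \<and> has_core 2 p (stair t) \<and> quot2_bar t p = m"
  then obtain r1 r2 k1 k2 where r: "is_partition r1" "is_partition r2" "p = interleave_part r1 r2 k1 k2"
    using partition_eq_interleave_part by blast
  note nf = interleave_part_normal_form[OF r(1,2), where m=k1 and n=k2]
  have t: "(if k2 \<le> k1 then nat (k1 - k2) else nat (k2 - k1 - 1)) = t"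
    using has_core_2_stair_unique[OF nf(2)] p r(3) by blast
  then have "m = (if k2 \<le> k1 then (r1, r2) else (r2, r1))" using nf(3) p r(3) by simp
  then show "p = interleave_part (fst m) (snd m) (int t) 0" using nf(1) t r(3) by simp
qed

lemma Phi_eq_interleave_part_imp:
  assumes R1: "is_partition r1" and R2: "is_partition r2" and m: "is_bipartition m"
    and core: "has_core 2 (interleave_part r1 r2 k1 k2) (stair t)"
    and eq: "Phi t m = interleave_part r1 r2 k1 k2"
  shows "t = (if k2 \<le> k1 then nat (k1 - k2) else nat (k2 - k1 - 1))
    \<and> m = (if k2 \<le> k1 then (r1, r2) else (r2, r1))"
proof -
  note nf = interleave_part_normal_form[OF R1 R2, where m=k1 and n=k2]
  have t: "t = (if k2 \<le> k1 then nat (k1 - k2) else nat (k2 - k1 - 1))"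
    using has_core_2_stair_unique[OF core nf(2)] .
  have "m = quot2_bar t (Phi t m)"
    using Phi_eq_interleave_part[OF m] quot2_bar_interleave_part m by (simp add: is_bipartition_def)
  then show ?thesis using nf(3) t eq by simp
qed

section \<open>Elementary operations on symbols\<close>

lemma interleave_move_fst_to_snd:
  "interleave (C1 - {a}) (insert b C2) = insert (2 * b) (interleave C1 C2 - {2 * a + 1})"
  by (rule sym, rule interleave_eqI) auto

lemma interleave_move_snd_to_fst:
  "interleave (insert a C1) (C2 - {b}) = insert (2 * a + 1) (interleave C1 C2 - {2 * b})"
  by (rule sym, rule interleave_eqI) auto

lemma odd_shift_union_eq_interleave:
  fixes h :: int
  assumes e: "int e = 2 * h + 1"
  shows "{2 * j + int e | j. j \<in> B1} \<union> {2 * j | j. j \<in> B2} = interleave ((\<lambda>x. x + h) ` B1) B2"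
proof (rule interleave_eqI)
  fix j :: int
  have "2 * j + 1 = 2 * j' + int e \<longleftrightarrow> j' = j - h" for j' using e by auto
  then show "2 * j + 1 \<in> {2 * j + int e | j. j \<in> B1} \<union> {2 * j | j. j \<in> B2} \<longleftrightarrow> j \<in> (\<lambda>x. x + h) ` B1"
    unfolding mem_image_plus by auto
  have "2 * j \<noteq> 2 * j' + int e" for j' using e by presburger
  then show "2 * j \<in> {2 * j + int e | j. j \<in> B1} \<union> {2 * j | j. j \<in> B2} \<longleftrightarrow> j \<in> B2"
    by auto
qed

text \<open>Both elementary operations move one bead of the interleaved abacus down by e positions
  into a gap: (a) from 2(j + h) + 1 to 2j, (b) from 2j to 2(j - e + h) + 1.\<close>
lemma elem_op_removes_hook:
  fixes h :: int
  assumes e: "int e = 2 * h + 1" and L: "is_partition l"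
    and A: "interleave ((\<lambda>x. x + h) ` fst B) (snd B) = beta_row l c"
    and op: "elem_op_a B B' \<or> elem_op_b e B B'"
  shows "removes_hook e l (abacus_part (interleave ((\<lambda>x. x + h) ` fst B') (snd B')))"
proof -
  let ?I = "interleave ((\<lambda>x. x + h) ` fst B) (snd B)"
  have "e > 0" using e by presburger
  have shift_diff: "(\<lambda>x. x + h) ` (C - {j}) = (\<lambda>x. x + h) ` C - {j + h}" for C j by auto
  have shift_insert: "(\<lambda>x. x + h) ` insert j C = insert (j + h) ((\<lambda>x. x + h) ` C)" for C j by auto
  obtain x where x: "x \<in> ?I" "x - int e \<notin> ?I"
    and B': "interleave ((\<lambda>x. x + h) ` fst B') (snd B') = insert (x - int e) (?I - {x})"
    using op
  proof
    assume "elem_op_a B B'"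
    then obtain j where j: "j \<in> fst B" "j \<notin> snd B" "B' = (fst B - {j}, insert j (snd B))"
      unfolding elem_op_a_def by blast
    have down: "2 * (j + h) + 1 - int e = 2 * j" using e by simp
    have "j + h \<in> (\<lambda>x. x + h) ` fst B" using j(1) by blast
    then have "2 * (j + h) + 1 \<in> ?I" "2 * j \<notin> ?I" using j(2) by (simp_all only: odd_mem_interleave even_mem_interleave not_False_eq_True)
    moreover have "interleave ((\<lambda>x. x + h) ` fst B') (snd B') = insert (2 * j) (?I - {2 * (j + h) + 1})"
      unfolding j(3) fst_conv snd_conv shift_diff interleave_move_fst_to_snd ..
    ultimately show thesis using that[of "2 * (j + h) + 1"] unfolding down by blast
  next
    assume "elem_op_b e B B'"
    then obtain j where j: "j \<in> snd B" "j - int e \<notin> fst B"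
      "B' = (insert (j - int e) (fst B), snd B - {j})"
      unfolding elem_op_b_def by blast
    have down: "2 * j - int e = 2 * (j - int e + h) + 1" using e by simp
    have "j - int e + h \<notin> (\<lambda>x. x + h) ` fst B" using j(2) by (simp add: mem_image_plus)
    then have "2 * j \<in> ?I" "2 * (j - int e + h) + 1 \<notin> ?I"
      using j(1) by (simp_all only: odd_mem_interleave even_mem_interleave not_False_eq_True)
    moreover have "interleave ((\<lambda>x. x + h) ` fst B') (snd B') = insert (2 * (j - int e + h) + 1) (?I - {2 * j})"
      unfolding j(3) fst_conv snd_conv shift_insert interleave_move_snd_to_fst ..
    ultimately show thesis using that[of "2 * j"] unfolding down by blast
  qed
  show ?thesis
    using abacus_part_slide_removes_hook[OF L x[unfolded A] \<open>e > 0\<close>]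
    unfolding B' A abacus_part_beta_row[OF L] .
qed

lemma elem_op_a_symbol_charge:
  assumes "is_bipartition \<mu>" "is_bipartition \<mu>'" "elem_op_a (symbol \<mu> c) (symbol \<mu>' c')"
  shows "c' = (fst c - 1, snd c + 1)"
  using assms beta_row_remove_charge beta_row_insert_charge
  unfolding elem_op_a_def symbol_def is_bipartition_def by (auto simp: prod_eq_iff)

lemma elem_op_b_symbol_charge:
  assumes "is_bipartition \<mu>" "is_bipartition \<mu>'" "elem_op_b e (symbol \<mu> c) (symbol \<mu>' c')"
  shows "c' = (fst c + 1, snd c - 1)"
  using assms beta_row_remove_charge beta_row_insert_charge
  unfolding elem_op_b_def symbol_def is_bipartition_def by (auto simp: prod_eq_iff)

lemma elem_op_symbol_removes_hook:
  fixes h :: int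
  assumes e: "int e = 2 * h + 1" and "is_bipartition \<mu>"
    and op: "elem_op_a (symbol \<mu> (int t - h, 0)) (symbol \<mu>' c') \<or> elem_op_b e (symbol \<mu> (int t - h, 0)) (symbol \<mu>' c')"
  shows "removes_hook e (Phi t \<mu>) (interleave_part (fst \<mu>') (snd \<mu>') (fst c' + h) (snd c'))"
proof -
  have R: "is_partition (fst \<mu>)" "is_partition (snd \<mu>)" using assms(2) by (auto simp: is_bipartition_def)
  have "interleave ((\<lambda>x. x + h) ` fst (symbol \<mu> (int t - h, 0))) (snd (symbol \<mu> (int t - h, 0)))
      = interleave (beta_row (fst \<mu>) (int t)) (beta_row (snd \<mu>) 0)"
    by (simp add: symbol_def beta_row_shift)
  then have B: "is_partition (Phi t \<mu>)"
    "interleave ((\<lambda>x. x + h) ` fst (symbol \<mu> (int t - h, 0))) (snd (symbol \<mu> (int t - h, 0)))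
      = beta_row (Phi t \<mu>) (int t + 1)"
    using interleave_part_beta_row[OF R, of "int t" 0] Phi_eq_interleave_part[OF assms(2)] by simp_all
  have "interleave ((\<lambda>x. x + h) ` fst (symbol \<mu>' c')) (snd (symbol \<mu>' c'))
      = interleave (beta_row (fst \<mu>') (fst c' + h)) (beta_row (snd \<mu>') (snd c'))"
    by (simp add: symbol_def beta_row_shift)
  then show ?thesis
    using elem_op_removes_hook[OF e B op] unfolding interleave_part_def by simp
qed

lemma Phi_after_elem_op_a:
  assumes "is_bipartition \<mu>'" "is_bipartition \<mu>''"
    and "has_core 2 (interleave_part (fst \<mu>') (snd \<mu>') k1 k2) (stair t')"
    and "Phi t' \<mu>'' = interleave_part (fst \<mu>') (snd \<mu>') k1 k2"
    and "k1 = int t - 1 \<and> k2 = 1"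
  shows "if t \<ge> 2 then t' = t - 2 \<and> \<mu>'' = \<mu>' else t' = 1 - t \<and> \<mu>'' = prod.swap \<mu>'"
  using Phi_eq_interleave_part_imp[OF _ _ assms(2-4)] assms(1,5)
  by (auto simp: is_bipartition_def prod.swap_def nat_diff_distrib)

lemma Phi_after_elem_op_b:
  assumes "is_bipartition \<mu>'" "is_bipartition \<mu>''"
    and "has_core 2 (interleave_part (fst \<mu>') (snd \<mu>') k1 k2) (stair t')"
    and "Phi t' \<mu>'' = interleave_part (fst \<mu>') (snd \<mu>') k1 k2"
    and "k1 = int t + 1 \<and> k2 = -1"
  shows "t' = t + 2 \<and> \<mu>'' = \<mu>'"
  using Phi_eq_interleave_part_imp[OF _ _ assms(2-4)] assms(1,5) by (auto simp: is_bipartition_def)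

theorem proposition7p3:
  fixes e t :: nat and \<mu> \<mu>' :: "(nat \<Rightarrow> nat) \<times> (nat \<Rightarrow> nat)" and c' :: "int \<times> int"
  assumes "e > 1" and "odd e"
    and "is_bipartition \<mu>" and "is_bipartition \<mu>'"
    and "elem_op_a (symbol \<mu> (int t + (1 - int e) div 2, 0)) (symbol \<mu>' c') \<or>
         elem_op_b e (symbol \<mu> (int t + (1 - int e) div 2, 0)) (symbol \<mu>' c')"
  shows "removes_hook e (Phi t \<mu>)
           (abacus_part ({2 * j + int e | j. j \<in> fst (symbol \<mu>' c')} \<union>
                         {2 * j | j. j \<in> snd (symbol \<mu>' c')}))
     \<and> (\<forall>t' \<mu>''. has_core 2 (abacus_part ({2 * j + int e | j. j \<in> fst (symbol \<mu>' c')} \<union>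
                                          {2 * j | j. j \<in> snd (symbol \<mu>' c')})) (stair t')
          \<and> is_bipartition \<mu>''
          \<and> Phi t' \<mu>'' = abacus_part ({2 * j + int e | j. j \<in> fst (symbol \<mu>' c')} \<union>
                                      {2 * j | j. j \<in> snd (symbol \<mu>' c')})
        \<longrightarrow> (elem_op_b e (symbol \<mu> (int t + (1 - int e) div 2, 0)) (symbol \<mu>' c') \<longrightarrow> t' = t + 2)
          \<and> (elem_op_a (symbol \<mu> (int t + (1 - int e) div 2, 0)) (symbol \<mu>' c') \<longrightarrow>
               t' = (if t \<ge> 2 then t - 2 else if t = 1 then 0 else 1))
          \<and> \<mu>'' = (if even t = even t' then \<mu>' else prod.swap \<mu>'))"
proof -
  define h where "h = (int e - 1) div 2"
  have e: "int e = 2 * h + 1" and c: "int t + (1 - int e) div 2 = int t - h"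
    using \<open>odd e\<close> by (auto simp: h_def elim!: oddE)
  let ?B = "symbol \<mu> (int t + (1 - int e) div 2, 0)" and ?B' = "symbol \<mu>' c'"
  define l' where "l' = interleave_part (fst \<mu>') (snd \<mu>') (fst c' + h) (snd c')"
  have l': "abacus_part ({2 * j + int e | j. j \<in> fst ?B'} \<union> {2 * j | j. j \<in> snd ?B'}) = l'"
    by (simp add: odd_shift_union_eq_interleave[OF e] l'_def interleave_part_def symbol_def beta_row_shift)
  have a: "fst c' + h = int t - 1 \<and> snd c' = 1" if "elem_op_a ?B ?B'"
    using elem_op_a_symbol_charge[OF assms(3,4) that] c by auto
  have b: "fst c' + h = int t + 1 \<and> snd c' = -1" if "elem_op_b e ?B ?B'"
    using elem_op_b_symbol_charge[OF assms(3,4) that] c by auto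
  show ?thesis unfolding l'
  proof (intro conjI allI impI)
    show "removes_hook e (Phi t \<mu>) l'"
      using elem_op_symbol_removes_hook[OF e assms(3)] assms(5) unfolding c l'_def .
    fix t' \<mu>'' assume "has_core 2 l' (stair t') \<and> is_bipartition \<mu>'' \<and> Phi t' \<mu>'' = l'"
    then have "has_core 2 l' (stair t')" "is_bipartition \<mu>''" "Phi t' \<mu>'' = l'" by simp_all
    note after = this[unfolded l'_def]
    show "elem_op_b e ?B ?B' \<Longrightarrow> t' = t + 2"
      and "elem_op_a ?B ?B' \<Longrightarrow> t' = (if t \<ge> 2 then t - 2 else if t = 1 then 0 else 1)"
      and "\<mu>'' = (if even t = even t' then \<mu>' else prod.swap \<mu>')"
      using Phi_after_elem_op_a[OF assms(4) after(2,1,3)] Phi_after_elem_op_b[OF assms(4) after(2,1,3)]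
        a b assms(5) by (auto split: if_splits)
  qed
qed

end
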